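(* Let $G$ be a complex, simply-connected, simple Lie group with Borel subgroup $B$, maximal torus $\mathbb{T}\subset B$, simple roots $\Delta$, Weyl group $W$ with longest element $w_0$, and let $P\supsetneq B$ be a proper parabolic subgroup with $\Delta_P\subsetneq\Delta$ and $w_P$ the longest element of $W_P$. Let $u\in W$. Then: (1) $\mathrm{id}\lessdot u\le_P w_0w_P$ if and only if $u=s_\alpha$ for some $\alpha\in\Delta$. (2) $\mathrm{id}\le_P u\lessdot w_0w_P$ if and only if $u=\pi_P(w_0s_\alpha)=w_0s_\alpha w_P$ for some $\alpha\in\Delta\setminus\Delta_P$.
   Context: $W_P$ is the subgroup of $W$ generated by the simple reflections $s_\alpha$, $\alpha\in\Delta_P$; $W^P$ is the set of minimal length coset representatives of $W/W_P$, and $\pi_P\colon W\to W^P$ sends $w$ to the element of $W^P$ in $wW_P$. $\ell$ is the length function. The Bruhat order $\le$ is the transitive closure of the covers $u\lessdot v$, meaning $\ell(v)=\ell(u)+1$ and $v=us_\gamma$ for some root $\gamma$ (with $s_\gamma$ its reflection). The $P$-Bruhat order $\le_P$ is the partial order on $W$ generated (by transitive closure) by the covers $u\lessdot_P v$, meaning $u\lessdot v$ and $\pi_P(u)<\pi_P(v)$ in Bruhat order. *)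

theory Defs
  imports "HOL-Analysis.Analysis"
begin

text \<open>The Weyl group of a complex simply-connected simple Lie group is the Weyl group
  of an irreducible reduced crystallographic root system; simple roots are a base.\<close>

definition rrefl :: "'a::euclidean_space \<Rightarrow> 'a \<Rightarrow> 'a" where
  "rrefl \<alpha> v = v - (2 * (v \<bullet> \<alpha>) / (\<alpha> \<bullet> \<alpha>)) *\<^sub>R \<alpha>"

definition root_system :: "'a::euclidean_space set \<Rightarrow> bool" where
  "root_system R \<longleftrightarrow> finite R \<and> 0 \<notin> R \<and> span R = UNIV
     \<and> (\<forall>\<alpha>\<in>R. \<forall>\<beta>\<in>R. rrefl \<alpha> \<beta> \<in> R)
     \<and> (\<forall>\<alpha>\<in>R. \<forall>\<beta>\<in>R. 2 * (\<beta> \<bullet> \<alpha>) / (\<alpha> \<bullet> \<alpha>) \<in> \<int>)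
     \<and> (\<forall>\<alpha>\<in>R. \<forall>c::real. c *\<^sub>R \<alpha> \<in> R \<longrightarrow> c = 1 \<or> c = -1)"

definition irreducible_rs :: "'a::euclidean_space set \<Rightarrow> bool" where
  "irreducible_rs R \<longleftrightarrow> \<not> (\<exists>R1 R2. R1 \<noteq> {} \<and> R2 \<noteq> {} \<and> R1 \<union> R2 = R \<and> R1 \<inter> R2 = {}
        \<and> (\<forall>a\<in>R1. \<forall>b\<in>R2. a \<bullet> b = 0))"

definition is_base :: "'a::euclidean_space set \<Rightarrow> 'a set \<Rightarrow> bool" where
  "is_base R \<Delta> \<longleftrightarrow> \<Delta> \<subseteq> R \<and> independent \<Delta>
     \<and> (\<forall>\<beta>\<in>R. \<exists>c::'a \<Rightarrow> int. \<beta> = (\<Sum>\<alpha>\<in>\<Delta>. of_int (c \<alpha>) *\<^sub>R \<alpha>)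
            \<and> ((\<forall>\<alpha>\<in>\<Delta>. c \<alpha> \<ge> 0) \<or> (\<forall>\<alpha>\<in>\<Delta>. c \<alpha> \<le> 0)))"

definition word :: "'a::euclidean_space list \<Rightarrow> 'a \<Rightarrow> 'a" where
  "word ws = foldr (\<lambda>\<alpha> f. rrefl \<alpha> \<circ> f) ws id"

text \<open>Group generated by the reflections s_alpha, alpha in S (a finite group of involutions,
  so the generated monoid is the generated group).\<close>
definition gen_group :: "'a::euclidean_space set \<Rightarrow> ('a \<Rightarrow> 'a) set" where
  "gen_group S = {word ws | ws. set ws \<subseteq> S}"

abbreviation weyl_group :: "'a::euclidean_space set \<Rightarrow> ('a \<Rightarrow> 'a) set" where
  "weyl_group R \<equiv> gen_group R"

definition len :: "'a::euclidean_space set \<Rightarrow> ('a \<Rightarrow> 'a) \<Rightarrow> nat" where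
  "len \<Delta> w = (LEAST n. \<exists>ws. set ws \<subseteq> \<Delta> \<and> length ws = n \<and> word ws = w)"

definition bruhat_cover :: "'a::euclidean_space set \<Rightarrow> 'a set \<Rightarrow> ('a \<Rightarrow> 'a) \<Rightarrow> ('a \<Rightarrow> 'a) \<Rightarrow> bool" where
  "bruhat_cover R \<Delta> u v \<longleftrightarrow> u \<in> weyl_group R \<and> v \<in> weyl_group R
     \<and> len \<Delta> v = len \<Delta> u + 1 \<and> (\<exists>\<gamma>\<in>R. v = u \<circ> rrefl \<gamma>)"

definition bruhat_le :: "'a::euclidean_space set \<Rightarrow> 'a set \<Rightarrow> ('a \<Rightarrow> 'a) \<Rightarrow> ('a \<Rightarrow> 'a) \<Rightarrow> bool" where
  "bruhat_le R \<Delta> = (bruhat_cover R \<Delta>)\<^sup>*\<^sup>*"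

definition bruhat_lt :: "'a::euclidean_space set \<Rightarrow> 'a set \<Rightarrow> ('a \<Rightarrow> 'a) \<Rightarrow> ('a \<Rightarrow> 'a) \<Rightarrow> bool" where
  "bruhat_lt R \<Delta> u v \<longleftrightarrow> bruhat_le R \<Delta> u v \<and> u \<noteq> v"

definition min_coset_reps :: "'a::euclidean_space set \<Rightarrow> 'a set \<Rightarrow> 'a set \<Rightarrow> ('a \<Rightarrow> 'a) set" where
  "min_coset_reps R \<Delta> \<Delta>P = {w \<in> weyl_group R. \<forall>x\<in>gen_group \<Delta>P. len \<Delta> w \<le> len \<Delta> (w \<circ> x)}"

definition projP :: "'a::euclidean_space set \<Rightarrow> 'a set \<Rightarrow> 'a set \<Rightarrow> ('a \<Rightarrow> 'a) \<Rightarrow> ('a \<Rightarrow> 'a)" where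
  "projP R \<Delta> \<Delta>P w = (THE v. v \<in> min_coset_reps R \<Delta> \<Delta>P \<and> (\<exists>x\<in>gen_group \<Delta>P. v = w \<circ> x))"

definition P_cover :: "'a::euclidean_space set \<Rightarrow> 'a set \<Rightarrow> 'a set \<Rightarrow> ('a \<Rightarrow> 'a) \<Rightarrow> ('a \<Rightarrow> 'a) \<Rightarrow> bool" where
  "P_cover R \<Delta> \<Delta>P u v \<longleftrightarrow> bruhat_cover R \<Delta> u v
     \<and> bruhat_lt R \<Delta> (projP R \<Delta> \<Delta>P u) (projP R \<Delta> \<Delta>P v)"

definition P_le :: "'a::euclidean_space set \<Rightarrow> 'a set \<Rightarrow> 'a set \<Rightarrow> ('a \<Rightarrow> 'a) \<Rightarrow> ('a \<Rightarrow> 'a) \<Rightarrow> bool" where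
  "P_le R \<Delta> \<Delta>P = (P_cover R \<Delta> \<Delta>P)\<^sup>*\<^sup>*"

definition longest :: "'a::euclidean_space set \<Rightarrow> ('a \<Rightarrow> 'a) set \<Rightarrow> ('a \<Rightarrow> 'a)" where
  "longest \<Delta> A = (THE w. w \<in> A \<and> (\<forall>v\<in>A. len \<Delta> v \<le> len \<Delta> w))"

end

(*
  W is realized as the group generated by the simple reflections of a based root system; the
  length of w is the number of positive roots that w makes negative, and W^P is the set of w
  keeping the simple roots of Delta_P positive.

  (1) id <. u means len u = 1, i.e. u = s_a with a simple.  For a outside Delta_P, s_a lies in W^P,
  and every v in W^P is P-below w0 wP: while v is not w0 wP some simple s_g gives a longer
  element s_g v of W^P (otherwise wP v^-1 would make all simple roots negative and so equal w0),
  and a Bruhat cover ending in W^P is a P-cover.  For a in Delta_P we use that irreducibility makes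
  the Dynkin diagram connected: walking along a shortest path from Delta - Delta_P to a produces
  v in W^P fixing a with x <=_P v x for x in W_P, and then s_a <=_P v s_a <._P s_a s_c v, an
  element of W^P, where c is the vertex preceding a.

  (2) id <=_P u forces u into W^P, since len - len o pi_P cannot increase along P-covers.  As
  len (w0 z) = N - len z and length is additive on W^P x W_P, a cover u <. w0 wP with u in W^P
  means len (w0 u wP) = 1, i.e. u = w0 s_a wP, and a length count puts a outside Delta_P.
*)
theory Submission
  imports Defs
begin

lemma rrefl_0: "rrefl 0 = id"
  by (auto simp: rrefl_def fun_eq_iff)

lemma linear_rrefl: "linear (rrefl a)"
proof (rule linearI)
  show "rrefl a (x + y) = rrefl a x + rrefl a y" for x y
    unfolding rrefl_def by (simp add: inner_add_left add_divide_distrib distrib_left scaleR_add_left)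
  show "rrefl a (c *\<^sub>R x) = c *\<^sub>R rrefl a x" for c x
    unfolding rrefl_def by (simp add: scaleR_diff_right)
qed

lemma orthogonal_transformation_rrefl: "orthogonal_transformation (rrefl a)"
proof (cases "a = 0")
  case True
  then show ?thesis by (simp add: rrefl_0 id_def)
next
  case False
  then have "a \<bullet> a \<noteq> 0" by simp
  then have "rrefl a x \<bullet> rrefl a y = x \<bullet> y" for x y
    unfolding rrefl_def by (simp add: inner_diff_left inner_diff_right inner_commute field_simps)
  then show ?thesis by (simp add: orthogonal_transformation_def linear_rrefl)
qed

lemma rrefl_rrefl [simp]: "rrefl a (rrefl a x) = x"
proof (cases "a = 0")
  case False
  then have "a \<bullet> a \<noteq> 0" by simp
  then show ?thesis unfolding rrefl_def by (simp add: inner_diff_left algebra_simps)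
qed (simp add: rrefl_0)

lemma rrefl_comp_rrefl [simp]: "rrefl a \<circ> rrefl a = id"
  by (auto simp: fun_eq_iff)

lemma rrefl_self: "rrefl a a = - a"
proof (cases "a = 0")
  case False
  then have "a \<bullet> a \<noteq> 0" by simp
  then show ?thesis unfolding rrefl_def by (simp add: scaleR_2)
qed (simp add: rrefl_0)

lemma rrefl_orthogonal: "x \<bullet> a = 0 \<Longrightarrow> rrefl a x = x"
  by (simp add: rrefl_def)

lemma rrefl_uminus_root: "rrefl (- a) = rrefl a"
  by (auto simp: rrefl_def fun_eq_iff)

lemma rrefl_uminus: "rrefl a (- x) = - rrefl a x"
  using linear_rrefl[of a] by (simp add: linear_neg)

lemma orthogonal_transformation_rrefl_conj:
  assumes "orthogonal_transformation f"
  shows "f (rrefl a x) = rrefl (f a) (f x)"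
  using assms unfolding orthogonal_transformation_def rrefl_def by (simp add: linear_diff linear_scale)

lemma orthogonal_transformation_comp_rrefl:
  "orthogonal_transformation f \<Longrightarrow> f \<circ> rrefl a = rrefl (f a) \<circ> f"
  by (auto simp: fun_eq_iff orthogonal_transformation_rrefl_conj)

lemma word_Nil [simp]: "word [] = id"
  by (simp add: word_def)

lemma word_Cons [simp]: "word (a # ws) = rrefl a \<circ> word ws"
  by (simp add: word_def)

lemma word_append: "word (ws @ vs) = word ws \<circ> word vs"
  by (induction ws) (auto simp: comp_assoc)

lemma word_snoc: "word (ws @ [a]) = word ws \<circ> rrefl a"
  by (simp add: word_append)

lemma word_rev_comp: "word (rev ws) \<circ> word ws = id"
proof (induction ws)
  case (Cons a ws)
  have "word (rev (a # ws)) \<circ> word (a # ws) = word (rev ws) \<circ> (rrefl a \<circ> rrefl a) \<circ> word ws"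
    by (simp add: word_append comp_assoc del: rrefl_comp_rrefl)
  also have "\<dots> = id" using Cons by (simp add: fun_eq_iff)
  finally show ?case .
qed simp

lemma word_comp_rev: "word ws \<circ> word (rev ws) = id"
  using word_rev_comp[of "rev ws"] by simp

lemma orthogonal_transformation_word: "orthogonal_transformation (word ws)"
proof (induction ws)
  case (Cons a ws)
  then show ?case
    unfolding word_Cons by (rule orthogonal_transformation_compose[OF orthogonal_transformation_rrefl])
qed (simp add: id_def)

lemma word_orthogonal: "(\<And>b. b \<in> set ws \<Longrightarrow> x \<bullet> b = 0) \<Longrightarrow> word ws x = x"
  by (induction ws) (auto simp: rrefl_orthogonal)

lemma gen_group_id [simp]: "id \<in> gen_group S"
  unfolding gen_group_def by (auto intro!: exI[of _ "[]"])

lemma gen_group_rrefl: "a \<in> S \<Longrightarrow> rrefl a \<in> gen_group S"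
  unfolding gen_group_def by (auto intro!: exI[of _ "[a]"])

lemma gen_groupE:
  assumes "f \<in> gen_group S"
  obtains ws where "set ws \<subseteq> S" "f = word ws"
  using assms unfolding gen_group_def by auto

lemma gen_group_comp:
  assumes "f \<in> gen_group S" "g \<in> gen_group S"
  shows "f \<circ> g \<in> gen_group S"
proof -
  obtain ws vs where "set ws \<subseteq> S" "f = word ws" "set vs \<subseteq> S" "g = word vs"
    using assms by (meson gen_groupE)
  then show ?thesis unfolding gen_group_def by (auto intro!: exI[of _ "ws @ vs"] simp: word_append)
qed

lemma gen_group_comp_rrefl: "f \<in> gen_group S \<Longrightarrow> a \<in> S \<Longrightarrow> f \<circ> rrefl a \<in> gen_group S"
  by (simp add: gen_group_comp gen_group_rrefl)

lemma gen_group_rrefl_comp: "a \<in> S \<Longrightarrow> f \<in> gen_group S \<Longrightarrow> rrefl a \<circ> f \<in> gen_group S"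
  by (simp add: gen_group_comp gen_group_rrefl)

lemma gen_group_mono: "S \<subseteq> T \<Longrightarrow> gen_group S \<subseteq> gen_group T"
  unfolding gen_group_def by auto

lemma orthogonal_transformation_gen_group: "f \<in> gen_group S \<Longrightarrow> orthogonal_transformation f"
  by (auto elim!: gen_groupE simp: orthogonal_transformation_word)

lemma linear_gen_group: "f \<in> gen_group S \<Longrightarrow> linear f"
  using orthogonal_transformation_gen_group orthogonal_transformation_linear by blast

lemma gen_group_orthogonal: "f \<in> gen_group S \<Longrightarrow> (\<And>b. b \<in> S \<Longrightarrow> x \<bullet> b = 0) \<Longrightarrow> f x = x"
  by (auto elim!: gen_groupE intro!: word_orthogonal)

lemma gen_group_inv:
  assumes "f \<in> gen_group S"
  shows "inv f \<in> gen_group S" "inv f \<circ> f = id" "f \<circ> inv f = id"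
proof -
  obtain ws where ws: "set ws \<subseteq> S" "f = word ws" using assms by (rule gen_groupE)
  then have "inv f = word (rev ws)"
    using inv_unique_comp[OF word_comp_rev word_rev_comp] by simp
  then show "inv f \<in> gen_group S" "inv f \<circ> f = id" "f \<circ> inv f = id"
    using ws word_rev_comp word_comp_rev by (auto simp: gen_group_def intro!: exI[of _ "rev ws"])
qed

lemma gen_group_inv_apply [simp]: "f \<in> gen_group S \<Longrightarrow> inv f (f x) = x"
  using gen_group_inv(2) by (metis comp_apply id_apply)

lemma gen_group_apply_inv [simp]: "f \<in> gen_group S \<Longrightarrow> f (inv f x) = x"
  using gen_group_inv(3) by (metis comp_apply id_apply)

lemma inv_inv_gen_group [simp]: "f \<in> gen_group S \<Longrightarrow> inv (inv f) = f"
  using inv_unique_comp[OF gen_group_inv(2,3)] by blast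

lemma inv_rrefl_comp:
  assumes "f \<in> gen_group S"
  shows "inv (rrefl a \<circ> f) = inv f \<circ> rrefl a"
  by (rule inv_unique_comp) (use assms in \<open>simp_all add: fun_eq_iff\<close>)

lemma span_orthogonal:
  assumes "\<And>a b. a \<in> A \<Longrightarrow> b \<in> B \<Longrightarrow> a \<bullet> b = 0" "x \<in> span A" "y \<in> span B"
  shows "x \<bullet> y = 0"
proof -
  have "orthogonal b x" if "b \<in> B" for b
    using orthogonal_to_span[OF assms(2), of b] assms(1) that by (simp add: orthogonal_def inner_commute)
  then have "orthogonal x y" using orthogonal_to_span[OF assms(3), of x] by (simp add: orthogonal_commute)
  then show ?thesis by (simp add: orthogonal_def)
qed


locale based_root_system =
  fixes R \<Delta> :: "'a::euclidean_space set"
  assumes root_system: "root_system R" and base: "is_base R \<Delta>"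
begin

lemma finite_R: "finite R" and zero_notin_R: "0 \<notin> R" and span_R: "span R = UNIV"
  and rrefl_in_R: "\<alpha> \<in> R \<Longrightarrow> \<beta> \<in> R \<Longrightarrow> rrefl \<alpha> \<beta> \<in> R"
  and reduced_R: "\<alpha> \<in> R \<Longrightarrow> c *\<^sub>R \<alpha> \<in> R \<Longrightarrow> c = 1 \<or> c = -1"
  using root_system unfolding root_system_def by auto

lemma simple_subset_R: "\<Delta> \<subseteq> R" and independent_simple: "independent \<Delta>"
  and simple_expansion: "\<beta> \<in> R \<Longrightarrow> \<exists>c::'a \<Rightarrow> int. \<beta> = (\<Sum>\<alpha>\<in>\<Delta>. of_int (c \<alpha>) *\<^sub>R \<alpha>)
            \<and> ((\<forall>\<alpha>\<in>\<Delta>. c \<alpha> \<ge> 0) \<or> (\<forall>\<alpha>\<in>\<Delta>. c \<alpha> \<le> 0))"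
  using base unfolding is_base_def by auto

lemma finite_simple: "finite \<Delta>"
  using independent_simple finiteI_independent by blast

lemma span_simple: "span \<Delta> = UNIV"
proof -
  have "R \<subseteq> span \<Delta>"
  proof
    fix b assume "b \<in> R"
    then obtain c :: "'a \<Rightarrow> int" where "b = (\<Sum>\<alpha>\<in>\<Delta>. of_int (c \<alpha>) *\<^sub>R \<alpha>)"
      using simple_expansion by blast
    then show "b \<in> span \<Delta>" by (simp add: span_sum span_scale span_base)
  qed
  then show ?thesis using span_R span_minimal[of R "span \<Delta>"] by auto
qed

lemma uminus_in_R: "b \<in> R \<Longrightarrow> - b \<in> R"
  using rrefl_in_R[of b b] by (simp add: rrefl_self)

lemma simple_nonzero: "a \<in> \<Delta> \<Longrightarrow> a \<noteq> 0"
  using simple_subset_R zero_notin_R by auto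

abbreviation coord :: "'a \<Rightarrow> 'a \<Rightarrow> real" where
  "coord x a \<equiv> real_vector.representation \<Delta> x a"

lemma coord_add [simp]: "coord (x + y) a = coord x a + coord y a"
  by (simp add: real_vector.representation_add[OF independent_simple] span_simple)

lemma coord_diff [simp]: "coord (x - y) a = coord x a - coord y a"
  by (simp add: real_vector.representation_diff[OF independent_simple] span_simple)

lemma coord_uminus [simp]: "coord (- x) a = - coord x a"
  by (simp add: real_vector.representation_neg[OF independent_simple] span_simple)

lemma coord_scale [simp]: "coord (c *\<^sub>R x) a = c * coord x a"
  by (simp add: real_vector.representation_scale[OF independent_simple] span_simple)

lemma coord_sum: "coord (\<Sum>i\<in>I. f i) a = (\<Sum>i\<in>I. coord (f i) a)"
  by (simp add: real_vector.representation_sum[OF independent_simple] span_simple)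

lemma coord_simple: "b \<in> \<Delta> \<Longrightarrow> coord b a = (if a = b then 1 else 0)"
  by (simp add: real_vector.representation_basis[OF independent_simple])

lemma coord_expansion: "x = (\<Sum>a\<in>\<Delta>. coord x a *\<^sub>R a)"
  using real_vector.sum_representation_eq[OF independent_simple _ finite_simple order_refl]
  by (simp add: span_simple)

lemma coord_unique:
  assumes "x = (\<Sum>b\<in>\<Delta>. c b *\<^sub>R b)" "a \<in> \<Delta>"
  shows "coord x a = c a"
proof -
  have "coord x a = (\<Sum>b\<in>\<Delta>. c b * (if a = b then 1 else 0))"
    using assms(1) by (simp add: coord_sum coord_simple)
  then show ?thesis using assms(2) finite_simple by (simp add: if_distrib cong: if_cong)
qed

lemma coord_eq_0_imp: "(\<And>a. a \<in> \<Delta> \<Longrightarrow> coord x a = 0) \<Longrightarrow> x = 0"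
  by (subst coord_expansion) simp

lemma coord_linear: "linear f \<Longrightarrow> coord (f b) a' = (\<Sum>a\<in>\<Delta>. coord b a * coord (f a) a')"
proof -
  assume "linear f"
  then have "f b = (\<Sum>a\<in>\<Delta>. coord b a *\<^sub>R f a)"
    using coord_expansion[of b] by (metis (no_types, lifting) linear_scale linear_sum sum.cong)
  then show ?thesis by (simp add: coord_sum)
qed

lemma coord_root_int: "b \<in> R \<Longrightarrow> a \<in> \<Delta> \<Longrightarrow> coord b a \<in> \<int>"
  using simple_expansion coord_unique by (metis Ints_of_int)

lemma coord_root_sign: "b \<in> R \<Longrightarrow> (\<forall>a\<in>\<Delta>. coord b a \<ge> 0) \<or> (\<forall>a\<in>\<Delta>. coord b a \<le> 0)"
proof -
  assume "b \<in> R"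
  then obtain c :: "'a \<Rightarrow> int" where c: "b = (\<Sum>\<alpha>\<in>\<Delta>. of_int (c \<alpha>) *\<^sub>R \<alpha>)"
    "(\<forall>\<alpha>\<in>\<Delta>. c \<alpha> \<ge> 0) \<or> (\<forall>\<alpha>\<in>\<Delta>. c \<alpha> \<le> 0)" using simple_expansion by blast
  have "\<forall>a\<in>\<Delta>. coord b a = of_int (c a)" using coord_unique[OF c(1)] by blast
  then show ?thesis using c(2) by auto
qed

definition pos_roots :: "'a set" where
  "pos_roots = {x \<in> R. \<forall>a\<in>\<Delta>. 0 \<le> coord x a}"

lemma pos_roots_in_R: "x \<in> pos_roots \<Longrightarrow> x \<in> R"
  by (simp add: pos_roots_def)

lemma finite_pos_roots: "finite pos_roots"
  using finite_R by (simp add: pos_roots_def)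

lemma simple_in_pos_roots: "a \<in> \<Delta> \<Longrightarrow> a \<in> pos_roots"
  using simple_subset_R by (auto simp: pos_roots_def coord_simple)

lemma root_pos_or_neg: "b \<in> R \<Longrightarrow> b \<in> pos_roots \<or> - b \<in> pos_roots"
  using coord_root_sign[of b] uminus_in_R[of b] by (auto simp: pos_roots_def)

lemma uminus_pos_root_notin: "b \<in> pos_roots \<Longrightarrow> - b \<notin> pos_roots"
proof
  assume b: "b \<in> pos_roots" and nb: "- b \<in> pos_roots"
  then have "coord b a = 0" if "a \<in> \<Delta>" for a
    using that unfolding pos_roots_def by force
  then have "b = 0" by (rule coord_eq_0_imp)
  then show False using b pos_roots_in_R zero_notin_R by blast
qed

lemma uminus_in_pos_roots_iff: "b \<in> R \<Longrightarrow> - b \<in> pos_roots \<longleftrightarrow> b \<notin> pos_roots"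
  using root_pos_or_neg uminus_pos_root_notin by blast

lemma pos_rootI_coord:
  assumes "b \<in> R" "a \<in> \<Delta>" "coord b a > 0" shows "b \<in> pos_roots"
  using coord_root_sign[OF assms(1)] assms by (force simp: pos_roots_def)

lemma rrefl_simple_pos_root:
  assumes a: "a \<in> \<Delta>" and b: "b \<in> pos_roots" and ne: "b \<noteq> a"
  shows "rrefl a b \<in> pos_roots"
proof -
  have bR: "b \<in> R" using b pos_roots_in_R by blast
  have "\<exists>a'\<in>\<Delta>. a' \<noteq> a \<and> coord b a' \<noteq> 0"
  proof (rule ccontr)
    assume "\<not> ?thesis"
    then have z: "\<forall>a'\<in>\<Delta>. a' \<noteq> a \<longrightarrow> coord b a' = 0" by auto
    have "b = (\<Sum>x\<in>\<Delta>. coord b x *\<^sub>R x)" by (rule coord_expansion)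
    also have "\<dots> = (\<Sum>x\<in>\<Delta>. (if x = a then coord b a else 0) *\<^sub>R x)"
      by (rule sum.cong) (use z in auto)
    also have "\<dots> = coord b a *\<^sub>R a"
      using a finite_simple by (simp add: if_distrib[of "\<lambda>r. r *\<^sub>R _"] cong: if_cong)
    finally have b_eq: "b = coord b a *\<^sub>R a" .
    then have "coord b a = 1 \<or> coord b a = -1"
      using reduced_R[of a "coord b a"] bR a simple_subset_R by auto
    moreover have "coord b a \<ge> 0" using b a by (auto simp: pos_roots_def)
    ultimately have "b = a" using b_eq by auto
    then show False using ne by simp
  qed
  then obtain a' where a': "a' \<in> \<Delta>" "a' \<noteq> a" "coord b a' \<noteq> 0" by blast
  then have "coord b a' > 0" using b by (force simp: pos_roots_def)
  moreover have "coord (rrefl a b) a' = coord b a'"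
    using a a' by (simp add: rrefl_def coord_simple)
  moreover have "rrefl a b \<in> R" using rrefl_in_R a bR simple_subset_R by auto
  ultimately show ?thesis using pos_rootI_coord a' by auto
qed

lemma rrefl_simple_pos_root_neg: "a \<in> \<Delta> \<Longrightarrow> b \<in> pos_roots \<Longrightarrow> rrefl a b \<notin> pos_roots \<Longrightarrow> b = a"
  using rrefl_simple_pos_root by blast

lemma simple_roots_inner_nonpos:
  assumes "a \<in> \<Delta>" "b \<in> \<Delta>" "a \<noteq> b"
  shows "a \<bullet> b \<le> 0"
proof -
  have "rrefl a b \<in> pos_roots" using rrefl_simple_pos_root assms simple_in_pos_roots by auto
  then have "coord (rrefl a b) a \<ge> 0" using assms by (auto simp: pos_roots_def)
  moreover have "coord (rrefl a b) a = - (2 * (b \<bullet> a) / (a \<bullet> a))"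
    using assms by (simp add: rrefl_def coord_simple)
  moreover have "a \<bullet> a > 0" using simple_nonzero assms by simp
  ultimately show ?thesis by (simp add: inner_commute divide_le_0_iff)
qed

lemma gen_group_in_R: "S \<subseteq> R \<Longrightarrow> w \<in> gen_group S \<Longrightarrow> b \<in> R \<Longrightarrow> w b \<in> R"
proof (elim gen_groupE)
  fix ws assume "set ws \<subseteq> S" "S \<subseteq> R" "b \<in> R" "w = word ws"
  then show "w b \<in> R" by (induction ws arbitrary: w) (auto intro: rrefl_in_R)
qed

abbreviation W :: "('a \<Rightarrow> 'a) set" where "W \<equiv> gen_group \<Delta>"

lemma W_in_R: "w \<in> W \<Longrightarrow> b \<in> R \<Longrightarrow> w b \<in> R"
  using gen_group_in_R simple_subset_R by blast


section \<open>Length equals the number of inversions\<close>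

definition inversions :: "('a \<Rightarrow> 'a) \<Rightarrow> 'a set" where
  "inversions w = {b \<in> pos_roots. w b \<notin> pos_roots}"

definition root_automorphism :: "('a \<Rightarrow> 'a) \<Rightarrow> bool" where
  "root_automorphism w \<longleftrightarrow> orthogonal_transformation w \<and> (\<forall>b\<in>R. w b \<in> R)"

lemma root_automorphism_W: "w \<in> W \<Longrightarrow> root_automorphism w"
  using orthogonal_transformation_gen_group W_in_R root_automorphism_def by blast

lemma root_automorphism_comp_rrefl: "root_automorphism w \<Longrightarrow> a \<in> R \<Longrightarrow> root_automorphism (w \<circ> rrefl a)"
  unfolding root_automorphism_def
  using orthogonal_transformation_compose[OF _ orthogonal_transformation_rrefl] rrefl_in_R by auto

lemma root_automorphism_linear: "root_automorphism w \<Longrightarrow> linear w"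
  by (simp add: root_automorphism_def orthogonal_transformation_linear)

lemma root_automorphism_uminus: "root_automorphism w \<Longrightarrow> w (- x) = - w x"
  using root_automorphism_linear linear_neg by blast

lemma root_automorphism_in_R: "root_automorphism w \<Longrightarrow> b \<in> R \<Longrightarrow> w b \<in> R"
  by (simp add: root_automorphism_def)

lemma finite_inversions: "finite (inversions w)"
  using finite_pos_roots by (simp add: inversions_def)

lemma inversions_subset: "inversions w \<subseteq> pos_roots"
  by (auto simp: inversions_def)

lemma inversions_comp_rrefl:
  assumes w: "root_automorphism w" and a: "a \<in> \<Delta>" and wa: "w a \<in> pos_roots"
  shows "inversions (w \<circ> rrefl a) = insert a (rrefl a ` inversions w)"
    and "a \<notin> rrefl a ` inversions w"
proof -
  show "a \<notin> rrefl a ` inversions w"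
  proof
    assume "a \<in> rrefl a ` inversions w"
    then have "rrefl a a \<in> inversions w" by (metis imageE rrefl_rrefl)
    then show False
      using simple_in_pos_roots[OF a] uminus_pos_root_notin by (auto simp: inversions_def rrefl_self)
  qed
  show "inversions (w \<circ> rrefl a) = insert a (rrefl a ` inversions w)"
  proof (intro set_eqI iffI)
    fix b assume "b \<in> inversions (w \<circ> rrefl a)"
    then have b: "b \<in> pos_roots" "w (rrefl a b) \<notin> pos_roots" by (auto simp: inversions_def)
    show "b \<in> insert a (rrefl a ` inversions w)"
    proof (cases "b = a")
      case False
      then have "rrefl a b \<in> inversions w"
        using rrefl_simple_pos_root[OF a b(1)] b(2) by (simp add: inversions_def)
      then show ?thesis by (metis imageI insertCI rrefl_rrefl)
    qed simp
  next
    fix b assume b: "b \<in> insert a (rrefl a ` inversions w)"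
    show "b \<in> inversions (w \<circ> rrefl a)"
    proof (cases "b = a")
      case True
      have "w (rrefl a a) \<notin> pos_roots"
        using wa uminus_pos_root_notin by (simp add: rrefl_self root_automorphism_uminus[OF w])
      then show ?thesis using True simple_in_pos_roots[OF a] by (simp add: inversions_def)
    next
      case False
      then obtain c where c: "c \<in> inversions w" "b = rrefl a c" using b by auto
      then have "c \<in> pos_roots" "w c \<notin> pos_roots" "c \<noteq> a" using wa by (auto simp: inversions_def)
      then show ?thesis using rrefl_simple_pos_root[OF a] c(2) by (simp add: inversions_def)
    qed
  qed
qed

lemma card_inversions_comp_rrefl_pos:
  assumes "root_automorphism w" "a \<in> \<Delta>" "w a \<in> pos_roots"
  shows "card (inversions (w \<circ> rrefl a)) = card (inversions w) + 1"
proof -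
  have "inj_on (rrefl a) (inversions w)" by (metis inj_onI rrefl_rrefl)
  then show ?thesis
    using inversions_comp_rrefl[OF assms] finite_inversions by (simp add: card_image)
qed

lemma card_inversions_comp_rrefl_neg:
  assumes w: "root_automorphism w" and a: "a \<in> \<Delta>" and wa: "w a \<notin> pos_roots"
  shows "card (inversions (w \<circ> rrefl a)) + 1 = card (inversions w)"
proof -
  have aR: "a \<in> R" using a simple_subset_R by auto
  then have "- w a \<in> pos_roots"
    using wa uminus_in_pos_roots_iff root_automorphism_in_R[OF w] by blast
  then have "(w \<circ> rrefl a) a \<in> pos_roots" by (simp add: rrefl_self root_automorphism_uminus[OF w])
  moreover have "w \<circ> rrefl a \<circ> rrefl a = w" by (simp add: comp_assoc)
  ultimately show ?thesis
    using card_inversions_comp_rrefl_pos[OF root_automorphism_comp_rrefl[OF w aR] a] by metis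
qed

lemma deletion_condition:
  assumes "set ws \<subseteq> \<Delta>" "a \<in> \<Delta>" "word ws a \<notin> pos_roots"
  shows "\<exists>vs. set vs \<subseteq> set ws \<and> length vs + 1 = length ws \<and> word ws \<circ> rrefl a = word vs"
  using assms
proof (induction ws)
  case Nil
  then show ?case using simple_in_pos_roots by auto
next
  case (Cons b ws)
  have b: "b \<in> \<Delta>" using Cons.prems by auto
  show ?case
  proof (cases "word ws a \<in> pos_roots")
    case False
    moreover have "set ws \<subseteq> \<Delta>" using Cons.prems by simp
    ultimately obtain vs where vs: "set vs \<subseteq> set ws" "length vs + 1 = length ws" "word ws \<circ> rrefl a = word vs"
      using Cons.IH Cons.prems(2) by blast
    have "set (b # vs) \<subseteq> set (b # ws)" "length (b # vs) + 1 = length (b # ws)" using vs by auto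
    moreover have "word (b # ws) \<circ> rrefl a = word (b # vs)" using vs(3) by (simp only: word_Cons comp_assoc)
    ultimately show ?thesis by blast
  next
    case True
    have "rrefl b (word ws a) \<notin> pos_roots" using Cons.prems by simp
    then have "word ws a = b" using rrefl_simple_pos_root_neg[OF b True] by simp
    then have conj: "word ws \<circ> rrefl a = rrefl b \<circ> word ws"
      using orthogonal_transformation_comp_rrefl[OF orthogonal_transformation_word] by metis
    have "word (b # ws) \<circ> rrefl a = rrefl b \<circ> (word ws \<circ> rrefl a)" by (simp only: word_Cons comp_assoc)
    also have "\<dots> = word ws" unfolding conj by (rule ext) simp
    finally have "word (b # ws) \<circ> rrefl a = word ws" .
    moreover have "set ws \<subseteq> set (b # ws)" "length ws + 1 = length (b # ws)" by auto
    ultimately show ?thesis by blast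
  qed
qed

lemma len_le_length: "set ws \<subseteq> \<Delta> \<Longrightarrow> len \<Delta> (word ws) \<le> length ws"
  unfolding len_def by (rule Least_le) blast

lemma reduced_wordE:
  assumes "w \<in> W"
  obtains ws where "set ws \<subseteq> \<Delta>" "length ws = len \<Delta> w" "word ws = w"
proof -
  obtain ws where "set ws \<subseteq> \<Delta>" "w = word ws" using assms by (rule gen_groupE)
  then have "\<exists>n ws. set ws \<subseteq> \<Delta> \<and> length ws = n \<and> word ws = w" by blast
  then have "\<exists>ws. set ws \<subseteq> \<Delta> \<and> length ws = len \<Delta> w \<and> word ws = w"
    unfolding len_def by (rule LeastI_ex)
  then show ?thesis using that by blast
qed

lemma word_in_W: "set ws \<subseteq> \<Delta> \<Longrightarrow> word ws \<in> W"
  by (auto simp: gen_group_def)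

lemma card_inversions_reduced_word:
  "set ws \<subseteq> \<Delta> \<Longrightarrow> len \<Delta> (word ws) = length ws \<Longrightarrow> card (inversions (word ws)) = length ws"
proof (induction ws rule: rev_induct)
  case Nil
  have "inversions (\<lambda>x. x) = {}" by (auto simp: inversions_def)
  then show ?case by simp
next
  case (snoc a vs)
  then have a: "a \<in> \<Delta>" and vs: "set vs \<subseteq> \<Delta>" by auto
  have red: "len \<Delta> (word vs \<circ> rrefl a) = length vs + 1"
    using snoc.prems(2) unfolding word_snoc by (simp add: o_def)
  have "len \<Delta> (word vs) = length vs"
  proof (rule ccontr)
    assume "len \<Delta> (word vs) \<noteq> length vs"
    then have lt: "len \<Delta> (word vs) < length vs" using len_le_length[OF vs] by simp
    obtain us where "set us \<subseteq> \<Delta>" "length us = len \<Delta> (word vs)" "word us = word vs"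
      using reduced_wordE[OF word_in_W[OF vs]] by blast
    then show False using red lt len_le_length[of "us @ [a]"] a by (simp add: word_snoc)
  qed
  then have IH: "card (inversions (word vs)) = length vs" using snoc.IH vs by simp
  have "word vs a \<in> pos_roots"
  proof (rule ccontr)
    assume "word vs a \<notin> pos_roots"
    then obtain us where us: "set us \<subseteq> set vs" "length us + 1 = length vs" "word vs \<circ> rrefl a = word us"
      using deletion_condition[OF vs a] by blast
    then have "len \<Delta> (word vs \<circ> rrefl a) \<le> length us" using len_le_length[of us] vs by auto
    then show False using red us(2) by simp
  qed
  then show ?case
    using card_inversions_comp_rrefl_pos[OF root_automorphism_W[OF word_in_W[OF vs]] a] IH
    unfolding word_snoc by (simp add: o_def)
qed

lemma len_eq_card_inversions: "w \<in> W \<Longrightarrow> len \<Delta> w = card (inversions w)"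
proof -
  assume "w \<in> W"
  then obtain ws where "set ws \<subseteq> \<Delta>" "length ws = len \<Delta> w" "word ws = w" by (rule reduced_wordE)
  then show ?thesis using card_inversions_reduced_word[of ws] by simp
qed

lemma len_comp_rrefl_pos: "w \<in> W \<Longrightarrow> a \<in> \<Delta> \<Longrightarrow> w a \<in> pos_roots \<Longrightarrow> len \<Delta> (w \<circ> rrefl a) = len \<Delta> w + 1"
  using len_eq_card_inversions gen_group_comp_rrefl card_inversions_comp_rrefl_pos root_automorphism_W by metis

lemma len_comp_rrefl_neg: "w \<in> W \<Longrightarrow> a \<in> \<Delta> \<Longrightarrow> w a \<notin> pos_roots \<Longrightarrow> len \<Delta> (w \<circ> rrefl a) + 1 = len \<Delta> w"
  using len_eq_card_inversions gen_group_comp_rrefl card_inversions_comp_rrefl_neg root_automorphism_W by metis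

lemma len_id [simp]: "len \<Delta> id = 0"
  using len_le_length[of "[]"] by simp

lemma len_eq_0_imp_id: "w \<in> W \<Longrightarrow> len \<Delta> w = 0 \<Longrightarrow> w = id"
proof -
  assume "w \<in> W" "len \<Delta> w = 0"
  then obtain ws where "length ws = 0" "word ws = w" by (metis reduced_wordE)
  then show ?thesis by simp
qed

lemma len_le_card_pos_roots: "w \<in> W \<Longrightarrow> len \<Delta> w \<le> card pos_roots"
  using len_eq_card_inversions card_mono[OF finite_pos_roots inversions_subset] by simp

lemma root_automorphism_pos_root:
  assumes w: "root_automorphism w" and b: "b \<in> pos_roots"
    and support: "\<And>a. a \<in> \<Delta> \<Longrightarrow> coord b a \<noteq> 0 \<Longrightarrow> w a \<in> pos_roots"
  shows "w b \<in> pos_roots"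
proof -
  have "coord b a * coord (w a) a' \<ge> 0" if "a \<in> \<Delta>" "a' \<in> \<Delta>" for a a'
  proof (cases "coord b a = 0")
    case False
    then have "coord (w a) a' \<ge> 0" using support that by (simp add: pos_roots_def)
    moreover have "coord b a \<ge> 0" using b that(1) by (simp add: pos_roots_def)
    ultimately show ?thesis by simp
  qed simp
  then have "coord (w b) a' \<ge> 0" if "a' \<in> \<Delta>" for a'
    using that coord_linear[OF root_automorphism_linear[OF w], of b a'] by (simp add: sum_nonneg)
  moreover have "w b \<in> R" using w b pos_roots_in_R root_automorphism_in_R by blast
  ultimately show ?thesis by (simp add: pos_roots_def)
qed

lemma root_automorphism_neg_root:
  assumes w: "root_automorphism w" and b: "b \<in> pos_roots"
    and support: "\<And>a. a \<in> \<Delta> \<Longrightarrow> coord b a \<noteq> 0 \<Longrightarrow> w a \<notin> pos_roots"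
  shows "w b \<notin> pos_roots"
proof -
  have neg_w: "root_automorphism (\<lambda>x. - w x)"
    using w uminus_in_R by (simp add: root_automorphism_def orthogonal_transformation_neg)
  have "- w a \<in> pos_roots" if "a \<in> \<Delta>" "coord b a \<noteq> 0" for a
    using that support uminus_in_pos_roots_iff root_automorphism_in_R[OF w] simple_subset_R by blast
  then have "- w b \<in> pos_roots" using root_automorphism_pos_root[OF neg_w b] by blast
  then show ?thesis using uminus_pos_root_notin by force
qed

lemma W_eq_id:
  assumes w: "w \<in> W" and simple_pos: "\<And>a. a \<in> \<Delta> \<Longrightarrow> w a \<in> pos_roots"
  shows "w = id"
proof -
  have "inversions w = {}"
    using root_automorphism_pos_root[OF root_automorphism_W[OF w]] simple_pos by (auto simp: inversions_def)
  then show ?thesis using len_eq_card_inversions[OF w] len_eq_0_imp_id[OF w] by simp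
qed


section \<open>Every root is conjugate to a simple root\<close>

definition height :: "'a \<Rightarrow> int" where
  "height b = (\<Sum>a\<in>\<Delta>. \<lfloor>coord b a\<rfloor>)"

lemma of_int_height: "b \<in> R \<Longrightarrow> of_int (height b) = (\<Sum>a\<in>\<Delta>. coord b a)"
  unfolding height_def of_int_sum
  by (rule sum.cong) (use coord_root_int in \<open>auto elim!: Ints_cases\<close>)

lemma height_nonneg: "b \<in> pos_roots \<Longrightarrow> height b \<ge> 0"
  unfolding height_def pos_roots_def by (auto intro!: sum_nonneg)

lemma pos_root_inner_simple:
  assumes "b \<in> pos_roots"
  shows "\<exists>a\<in>\<Delta>. a \<bullet> b > 0"
proof (rule ccontr)
  assume "\<not> ?thesis"
  then have "coord b a * (a \<bullet> b) \<le> 0" if "a \<in> \<Delta>" for a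
    using that assms by (intro mult_nonneg_nonpos) (auto simp: pos_roots_def)
  then have "(\<Sum>a\<in>\<Delta>. coord b a *\<^sub>R a) \<bullet> b \<le> 0"
    by (simp add: inner_sum_left sum_nonpos)
  then have "b \<bullet> b \<le> 0" using coord_expansion[of b] by simp
  moreover have "b \<noteq> 0" using assms pos_roots_in_R zero_notin_R by blast
  ultimately show False by (metis inner_gt_zero_iff not_le)
qed

lemma height_rrefl_simple_less:
  assumes a: "a \<in> \<Delta>" "a \<bullet> b > 0" and b: "b \<in> R"
  shows "height (rrefl a b) < height b"
proof -
  define k where "k = 2 * (b \<bullet> a) / (a \<bullet> a)"
  have "k > 0" using a simple_nonzero[of a] by (simp add: k_def inner_commute)
  have "coord (rrefl a b) a' = coord b a' - k * (if a' = a then 1 else 0)" for a'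
    using a by (simp add: rrefl_def k_def coord_simple)
  then have "(\<Sum>a'\<in>\<Delta>. coord (rrefl a b) a') = (\<Sum>a'\<in>\<Delta>. coord b a') - k"
    using a(1) finite_simple by (simp add: sum_subtractf if_distrib[of "\<lambda>x. k * x"] cong: if_cong)
  moreover have "rrefl a b \<in> R" using rrefl_in_R a(1) b simple_subset_R by blast
  ultimately have "of_int (height (rrefl a b)) = of_int (height b) - k"
    using of_int_height b by simp
  then show ?thesis using \<open>k > 0\<close> by linarith
qed

lemma pos_root_W_conj_simple: "b \<in> pos_roots \<Longrightarrow> \<exists>w\<in>W. \<exists>a\<in>\<Delta>. b = w a"
proof (induction "nat (height b)" arbitrary: b rule: less_induct)
  case less
  show ?case
  proof (cases "b \<in> \<Delta>")
    case True
    then show ?thesis by (intro bexI[of _ id]) auto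
  next
    case False
    obtain a where a: "a \<in> \<Delta>" "a \<bullet> b > 0" using pos_root_inner_simple[OF less.prems] by blast
    then have c: "rrefl a b \<in> pos_roots"
      using rrefl_simple_pos_root[OF a(1) less.prems] False by blast
    have "height (rrefl a b) < height b"
      using height_rrefl_simple_less[OF a] less.prems pos_roots_in_R by blast
    then have "nat (height (rrefl a b)) < nat (height b)" using height_nonneg[OF c] by linarith
    then obtain w a' where w: "w \<in> W" "a' \<in> \<Delta>" "rrefl a b = w a'" using less.hyps c by blast
    then have "b = (rrefl a \<circ> w) a'" by (metis comp_apply rrefl_rrefl)
    then show ?thesis using gen_group_rrefl_comp[OF a(1) w(1)] w(2) by blast
  qed
qed

lemma root_W_conj_simple:
  assumes "b \<in> R"
  obtains w a where "w \<in> W" "a \<in> \<Delta>" "b = w a \<or> b = - w a"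
proof (cases "b \<in> pos_roots")
  case True
  then show ?thesis using pos_root_W_conj_simple that by blast
next
  case False
  then have "- b \<in> pos_roots" using uminus_in_pos_roots_iff assms by blast
  then obtain w a where "w \<in> W" "a \<in> \<Delta>" "- b = w a" using pos_root_W_conj_simple by blast
  moreover from this(3) have "b = - w a" by (metis minus_minus)
  ultimately show ?thesis using that by blast
qed

lemma rrefl_W_conj_simple:
  assumes w: "w \<in> W" and a: "a \<in> \<Delta>"
  shows "rrefl (w a) \<in> W"
proof -
  have "w \<circ> rrefl a \<circ> inv w = rrefl (w a) \<circ> (w \<circ> inv w)"
    using orthogonal_transformation_comp_rrefl[OF orthogonal_transformation_gen_group[OF w]]
    by (simp add: comp_assoc)
  then have "rrefl (w a) = w \<circ> rrefl a \<circ> inv w" using gen_group_inv(3)[OF w] by simp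
  then show ?thesis using w a gen_group_inv(1)[OF w] by (simp add: gen_group_comp gen_group_comp_rrefl)
qed

lemma rrefl_root_in_W:
  assumes "b \<in> R"
  shows "rrefl b \<in> W"
proof -
  obtain w a where "w \<in> W" "a \<in> \<Delta>" "b = w a \<or> b = - w a" using root_W_conj_simple[OF assms] .
  then show ?thesis using rrefl_W_conj_simple rrefl_uminus_root by metis
qed

lemma weyl_group_eq_W: "weyl_group R = W"
proof
  show "weyl_group R \<subseteq> W"
  proof
    fix w assume "w \<in> weyl_group R"
    then obtain ws where ws: "set ws \<subseteq> R" "w = word ws" by (rule gen_groupE)
    have "word ws \<in> W" using ws(1)
      by (induction ws) (auto intro: gen_group_comp rrefl_root_in_W)
    then show "w \<in> W" using ws by simp
  qed
  show "W \<subseteq> weyl_group R" using gen_group_mono simple_subset_R by blast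
qed


section \<open>Standard parabolic subgroups and their longest elements\<close>

definition parabolic_roots :: "'a set \<Rightarrow> 'a set" where
  "parabolic_roots J = {b \<in> R. \<forall>a\<in>\<Delta> - J. coord b a = 0}"

lemma simple_in_parabolic_roots: "a \<in> J \<Longrightarrow> J \<subseteq> \<Delta> \<Longrightarrow> a \<in> parabolic_roots J"
  using simple_subset_R by (auto simp: parabolic_roots_def coord_simple)

lemma simple_notin_parabolic_roots: "a \<in> \<Delta> - J \<Longrightarrow> a \<notin> parabolic_roots J"
  by (auto simp: parabolic_roots_def coord_simple)

lemma coord_notin_parabolic_roots: "a \<in> \<Delta> - J \<Longrightarrow> coord b a \<noteq> 0 \<Longrightarrow> b \<notin> parabolic_roots J"
  by (auto simp: parabolic_roots_def)

lemma uminus_parabolic_roots: "b \<in> parabolic_roots J \<Longrightarrow> - b \<in> parabolic_roots J"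
  by (auto simp: parabolic_roots_def uminus_in_R)

lemma parabolic_roots_simple: "parabolic_roots \<Delta> = R"
  by (auto simp: parabolic_roots_def)

lemma coord_parabolic_outside:
  assumes J: "J \<subseteq> \<Delta>" and x: "x \<in> gen_group J" and a: "a \<in> \<Delta> - J"
  shows "coord (x b) a = coord b a"
proof -
  obtain ws where ws: "set ws \<subseteq> J" "x = word ws" using x by (rule gen_groupE)
  have "coord (word ws b) a = coord b a" using ws(1)
  proof (induction ws)
    case (Cons c ws)
    then have "coord c a = 0" using J a coord_simple[of c a] by auto
    then show ?case using Cons by (simp add: rrefl_def)
  qed simp
  then show ?thesis using ws by simp
qed

lemma gen_group_parabolic_roots:
  assumes J: "J \<subseteq> \<Delta>" and x: "x \<in> gen_group J" and b: "b \<in> parabolic_roots J"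
  shows "x b \<in> parabolic_roots J"
proof -
  have "x b \<in> R" using gen_group_in_R[of J x b] J simple_subset_R x b by (auto simp: parabolic_roots_def)
  then show ?thesis using coord_parabolic_outside[OF J x] b by (auto simp: parabolic_roots_def)
qed

text \<open>Elements of \<open>W\<^sub>J\<close> do not change the coordinates outside \<open>J\<close>.\<close>

lemma parabolic_pos_root_outside:
  assumes J: "J \<subseteq> \<Delta>" and x: "x \<in> gen_group J" and b: "b \<in> pos_roots - parabolic_roots J"
  shows "x b \<in> pos_roots - parabolic_roots J"
proof -
  obtain a where a: "a \<in> \<Delta> - J" "coord b a \<noteq> 0" using b pos_roots_in_R by (auto simp: parabolic_roots_def)
  then have pos: "coord (x b) a > 0"
    using b coord_parabolic_outside[OF J x a(1)] by (force simp: pos_roots_def)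
  have "x b \<in> R" using gen_group_in_R[of J x b] J simple_subset_R x b pos_roots_in_R by auto
  then show ?thesis using pos_rootI_coord[OF _ _ pos] coord_notin_parabolic_roots[OF a(1)] pos a(1) by force
qed

lemma root_automorphism_parabolic_pos:
  assumes w: "root_automorphism w" and J: "\<forall>a\<in>J. w a \<in> pos_roots"
    and b: "b \<in> pos_roots" "b \<in> parabolic_roots J"
  shows "w b \<in> pos_roots"
  using b J by (intro root_automorphism_pos_root[OF w b(1)]) (auto simp: parabolic_roots_def)

lemma root_automorphism_parabolic_neg:
  assumes w: "root_automorphism w" and J: "\<forall>a\<in>J. w a \<notin> pos_roots"
    and b: "b \<in> pos_roots" "b \<in> parabolic_roots J"
  shows "w b \<notin> pos_roots"
  using b J by (intro root_automorphism_neg_root[OF w b(1)]) (auto simp: parabolic_roots_def)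

lemma parabolic_eq_id:
  assumes J: "J \<subseteq> \<Delta>" and x: "x \<in> gen_group J" and pos: "\<forall>a\<in>J. x a \<in> pos_roots"
  shows "x = id"
proof (rule W_eq_id)
  show "x \<in> W" using x gen_group_mono[OF J] by blast
  show "x a \<in> pos_roots" if "a \<in> \<Delta>" for a
    using that pos parabolic_pos_root_outside[OF J x, of a] simple_in_pos_roots simple_notin_parabolic_roots
    by (cases "a \<in> J") auto
qed

lemma parabolic_simple_neg_unique:
  assumes J: "J \<subseteq> \<Delta>" and x: "x \<in> gen_group J" and y: "y \<in> gen_group J"
    and x_neg: "\<forall>a\<in>J. x a \<notin> pos_roots" and y_neg: "\<forall>a\<in>J. y a \<notin> pos_roots"
  shows "x = y"
proof -
  have x_aut: "root_automorphism x" using x gen_group_mono[OF J] root_automorphism_W by blast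
  have "inv x (y a) \<in> pos_roots" if a: "a \<in> J" for a
  proof (rule ccontr)
    have ya: "y a \<in> parabolic_roots J" using gen_group_parabolic_roots[OF J y simple_in_parabolic_roots[OF a J]] .
    then have xya: "inv x (y a) \<in> parabolic_roots J"
      using gen_group_parabolic_roots[OF J gen_group_inv(1)[OF x]] by blast
    assume "inv x (y a) \<notin> pos_roots"
    then have "- inv x (y a) \<in> pos_roots" using uminus_in_pos_roots_iff xya by (auto simp: parabolic_roots_def)
    then have "x (- inv x (y a)) \<notin> pos_roots"
      using root_automorphism_parabolic_neg[OF x_aut x_neg] uminus_parabolic_roots[OF xya] by blast
    moreover have "- y a \<in> pos_roots" using uminus_in_pos_roots_iff ya y_neg a by (auto simp: parabolic_roots_def)
    moreover have "x (- inv x (y a)) = - y a"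
      using root_automorphism_uminus[OF x_aut] gen_group_apply_inv[OF x] by simp
    ultimately show False by simp
  qed
  then have "inv x \<circ> y = id"
    using parabolic_eq_id[OF J gen_group_comp[OF gen_group_inv(1)[OF x] y]] by simp
  then have "x \<circ> (inv x \<circ> y) = x" by simp
  then show ?thesis using gen_group_inv(3)[OF x] by (simp add: comp_assoc[symmetric])
qed

lemma parabolic_len_max_simple_neg:
  assumes J: "J \<subseteq> \<Delta>" and x: "x \<in> gen_group J" and max: "\<forall>y\<in>gen_group J. len \<Delta> y \<le> len \<Delta> x"
  shows "\<forall>a\<in>J. x a \<notin> pos_roots"
proof (intro ballI notI)
  fix a assume a: "a \<in> J" and pos: "x a \<in> pos_roots"
  have "x \<in> W" using x gen_group_mono[OF J] by blast
  then have "len \<Delta> (x \<circ> rrefl a) = len \<Delta> x + 1" using len_comp_rrefl_pos pos a J by blast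
  moreover have "x \<circ> rrefl a \<in> gen_group J" using gen_group_comp_rrefl[OF x a] .
  ultimately show False using max by fastforce
qed

lemma parabolic_len_max_exists:
  assumes J: "J \<subseteq> \<Delta>"
  obtains x where "x \<in> gen_group J" "\<forall>y\<in>gen_group J. len \<Delta> y \<le> len \<Delta> x"
proof -
  let ?S = "len \<Delta> ` gen_group J"
  have fin: "finite ?S"
    by (rule finite_subset[of _ "{0..card pos_roots}"]) (use len_le_card_pos_roots gen_group_mono[OF J] in auto)
  have "?S \<noteq> {}" using gen_group_id[of J] by blast
  then have "Max ?S \<in> ?S" using Max_in[OF fin] by blast
  then obtain x where x: "x \<in> gen_group J" "len \<Delta> x = Max ?S" by (metis imageE)
  show ?thesis using that x Max_ge[OF fin] by (intro that) auto
qed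

lemma longest_parabolic:
  assumes J: "J \<subseteq> \<Delta>"
  shows "longest \<Delta> (gen_group J) \<in> gen_group J"
    and "\<forall>a\<in>J. longest \<Delta> (gen_group J) a \<notin> pos_roots"
proof -
  obtain x where x: "x \<in> gen_group J" "\<forall>y\<in>gen_group J. len \<Delta> y \<le> len \<Delta> x"
    using parabolic_len_max_exists[OF J] .
  have "longest \<Delta> (gen_group J) = x"
    unfolding longest_def
  proof (rule the_equality)
    fix w assume w: "w \<in> gen_group J \<and> (\<forall>v\<in>gen_group J. len \<Delta> v \<le> len \<Delta> w)"
    then show "w = x"
      using parabolic_simple_neg_unique[OF J _ x(1) parabolic_len_max_simple_neg[OF J _ _]
          parabolic_len_max_simple_neg[OF J x]] by blast
  qed (use x in blast)
  then show "longest \<Delta> (gen_group J) \<in> gen_group J" "\<forall>a\<in>J. longest \<Delta> (gen_group J) a \<notin> pos_roots"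
    using x parabolic_len_max_simple_neg[OF J x] by auto
qed

lemma longest_parabolic_eqI:
  assumes "J \<subseteq> \<Delta>" "x \<in> gen_group J" "\<forall>a\<in>J. x a \<notin> pos_roots"
  shows "longest \<Delta> (gen_group J) = x"
  using parabolic_simple_neg_unique[OF assms(1) longest_parabolic(1)[OF assms(1)] assms(2)
      longest_parabolic(2)[OF assms(1)] assms(3)] .

lemma longest_parabolic_involution:
  assumes J: "J \<subseteq> \<Delta>"
  shows "longest \<Delta> (gen_group J) (longest \<Delta> (gen_group J) x) = x"
proof -
  let ?x = "longest \<Delta> (gen_group J)"
  have x: "?x \<in> gen_group J" and x_neg: "\<forall>a\<in>J. ?x a \<notin> pos_roots" using longest_parabolic[OF J] by auto
  have x_aut: "root_automorphism ?x" using x gen_group_mono[OF J] root_automorphism_W by blast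
  have "inv ?x a \<notin> pos_roots" if a: "a \<in> J" for a
  proof
    assume "inv ?x a \<in> pos_roots"
    moreover have "inv ?x a \<in> parabolic_roots J"
      using gen_group_parabolic_roots[OF J gen_group_inv(1)[OF x] simple_in_parabolic_roots[OF a J]] .
    ultimately have "?x (inv ?x a) \<notin> pos_roots" using root_automorphism_parabolic_neg[OF x_aut x_neg] by blast
    then show False using x simple_in_pos_roots a J by auto
  qed
  then have "inv ?x = ?x" using longest_parabolic_eqI[OF J gen_group_inv(1)[OF x]] by simp
  then show ?thesis using gen_group_inv_apply[OF x, of x] by simp
qed


section \<open>Minimal coset representatives\<close>

text \<open>Length is additive on \<open>v \<circ> x\<close> with \<open>x \<in> W\<^sub>J\<close> as long as \<open>v\<close> keeps \<open>J\<close> positive: by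
  induction on a word for \<open>x\<close>, each new letter \<open>a\<close> changes the sign of \<open>x a\<close> and of \<open>v (x a)\<close>
  alike, because \<open>x a\<close> is a root of \<open>W\<^sub>J\<close>.\<close>

lemma len_comp_parabolic:
  assumes J: "J \<subseteq> \<Delta>" and v: "v \<in> W" and v_pos: "\<forall>a\<in>J. v a \<in> pos_roots" and x: "x \<in> gen_group J"
  shows "len \<Delta> (v \<circ> x) = len \<Delta> v + len \<Delta> x"
proof -
  obtain xs where xs: "set xs \<subseteq> J" "x = word xs" using x by (rule gen_groupE)
  have v_aut: "root_automorphism v" using root_automorphism_W[OF v] .
  have "len \<Delta> (v \<circ> word xs) = len \<Delta> v + len \<Delta> (word xs)" using xs(1)
  proof (induction xs rule: rev_induct)
    case (snoc a xs)
    then have a: "a \<in> J" and xs: "set xs \<subseteq> J" by auto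
    have aD: "a \<in> \<Delta>" using a J by auto
    let ?y = "word xs"
    have y: "?y \<in> gen_group J" using xs by (auto simp: gen_group_def)
    have yW: "?y \<in> W" using y gen_group_mono[OF J] by blast
    have vyW: "v \<circ> ?y \<in> W" using gen_group_comp[OF v yW] .
    have IH: "len \<Delta> (v \<circ> ?y) = len \<Delta> v + len \<Delta> ?y" using snoc.IH xs by blast
    have ya: "?y a \<in> parabolic_roots J"
      using gen_group_parabolic_roots[OF J y simple_in_parabolic_roots[OF a J]] .
    have eq: "v \<circ> word (xs @ [a]) = (v \<circ> ?y) \<circ> rrefl a" "word (xs @ [a]) = ?y \<circ> rrefl a"
      by (simp_all add: word_snoc comp_assoc)
    show ?case
    proof (cases "?y a \<in> pos_roots")
      case True
      have "v (?y a) \<in> pos_roots" using root_automorphism_parabolic_pos[OF v_aut v_pos True ya] .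
      then show ?thesis
        unfolding eq using len_comp_rrefl_pos[OF vyW aD] len_comp_rrefl_pos[OF yW aD True] IH
        by (simp add: o_def)
    next
      case False
      then have "- ?y a \<in> pos_roots" using uminus_in_pos_roots_iff ya by (auto simp: parabolic_roots_def)
      then have "v (- ?y a) \<in> pos_roots"
        using root_automorphism_parabolic_pos[OF v_aut v_pos] uminus_parabolic_roots[OF ya] by blast
      then have "v (?y a) \<notin> pos_roots" using root_automorphism_uminus[OF v_aut] uminus_pos_root_notin by fastforce
      then show ?thesis
        unfolding eq using len_comp_rrefl_neg[OF vyW aD] len_comp_rrefl_neg[OF yW aD False] IH
        by (simp add: o_def)
    qed
  qed simp
  then show ?thesis using xs by simp
qed

lemma min_coset_reps_iff:
  assumes J: "J \<subseteq> \<Delta>"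
  shows "v \<in> min_coset_reps R \<Delta> J \<longleftrightarrow> v \<in> W \<and> (\<forall>a\<in>J. v a \<in> pos_roots)"
proof
  assume v: "v \<in> min_coset_reps R \<Delta> J"
  then have vW: "v \<in> W" and min: "\<forall>x\<in>gen_group J. len \<Delta> v \<le> len \<Delta> (v \<circ> x)"
    unfolding min_coset_reps_def weyl_group_eq_W by blast+
  have "v a \<in> pos_roots" if a: "a \<in> J" for a
  proof (rule ccontr)
    assume "v a \<notin> pos_roots"
    then have "len \<Delta> (v \<circ> rrefl a) + 1 = len \<Delta> v" using len_comp_rrefl_neg[OF vW] a J by blast
    then show False using min gen_group_rrefl[OF a] by fastforce
  qed
  then show "v \<in> W \<and> (\<forall>a\<in>J. v a \<in> pos_roots)" using vW by blast
next
  assume "v \<in> W \<and> (\<forall>a\<in>J. v a \<in> pos_roots)"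
  then show "v \<in> min_coset_reps R \<Delta> J"
    unfolding min_coset_reps_def weyl_group_eq_W using len_comp_parabolic[OF J] by simp
qed

lemma min_coset_reps_W: "J \<subseteq> \<Delta> \<Longrightarrow> v \<in> min_coset_reps R \<Delta> J \<Longrightarrow> v \<in> W"
  using min_coset_reps_iff by blast

lemma min_coset_reps_pos: "J \<subseteq> \<Delta> \<Longrightarrow> v \<in> min_coset_reps R \<Delta> J \<Longrightarrow> a \<in> J \<Longrightarrow> v a \<in> pos_roots"
  using min_coset_reps_iff by blast

lemma min_coset_reps_len_comp:
  "J \<subseteq> \<Delta> \<Longrightarrow> v \<in> min_coset_reps R \<Delta> J \<Longrightarrow> x \<in> gen_group J \<Longrightarrow> len \<Delta> (v \<circ> x) = len \<Delta> v + len \<Delta> x"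
  using len_comp_parabolic min_coset_reps_iff by blast

lemma id_min_coset_rep: "J \<subseteq> \<Delta> \<Longrightarrow> id \<in> min_coset_reps R \<Delta> J"
  using min_coset_reps_iff simple_in_pos_roots by auto

lemma min_coset_reps_comp_eq_id:
  assumes J: "J \<subseteq> \<Delta>" and v: "v \<in> min_coset_reps R \<Delta> J" and vz: "v \<circ> z \<in> min_coset_reps R \<Delta> J"
    and z: "z \<in> gen_group J"
  shows "z = id"
proof -
  have "v = (v \<circ> z) \<circ> inv z" using gen_group_inv(3)[OF z] by (simp add: comp_assoc)
  then have "len \<Delta> v = len \<Delta> (v \<circ> z) + len \<Delta> (inv z)"
    using min_coset_reps_len_comp[OF J vz gen_group_inv(1)[OF z]] by simp
  moreover have "len \<Delta> (v \<circ> z) = len \<Delta> v + len \<Delta> z" using min_coset_reps_len_comp[OF J v z] .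
  ultimately show ?thesis using len_eq_0_imp_id z gen_group_mono[OF J] by auto
qed

lemma projP_eqI:
  assumes J: "J \<subseteq> \<Delta>" and v: "v \<in> min_coset_reps R \<Delta> J" and x: "x \<in> gen_group J" and eq: "v = w \<circ> x"
  shows "projP R \<Delta> J w = v"
  unfolding projP_def
proof (rule the_equality)
  fix v' assume "v' \<in> min_coset_reps R \<Delta> J \<and> (\<exists>x\<in>gen_group J. v' = w \<circ> x)"
  then obtain x' where v': "v' \<in> min_coset_reps R \<Delta> J" "x' \<in> gen_group J" "v' = w \<circ> x'" by blast
  have "w = v \<circ> inv x" using eq gen_group_inv(3)[OF x] by (simp add: comp_assoc)
  then have "v' = v \<circ> (inv x \<circ> x')" using v'(3) by (simp add: comp_assoc)
  moreover have "inv x \<circ> x' \<in> gen_group J" using gen_group_comp[OF gen_group_inv(1)[OF x] v'(2)] .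
  ultimately show "v' = v" using min_coset_reps_comp_eq_id[OF J v] v'(1) by fastforce
qed (use v x eq in blast)

lemma projP_comp_parabolic:
  assumes J: "J \<subseteq> \<Delta>" and v: "v \<in> min_coset_reps R \<Delta> J" and x: "x \<in> gen_group J"
  shows "projP R \<Delta> J (v \<circ> x) = v"
  using projP_eqI[OF J v gen_group_inv(1)[OF x]] gen_group_inv(3)[OF x] by (simp add: comp_assoc)

lemma projP_min_coset_rep: "J \<subseteq> \<Delta> \<Longrightarrow> v \<in> min_coset_reps R \<Delta> J \<Longrightarrow> projP R \<Delta> J v = v"
  using projP_comp_parabolic[of J v id] by simp

text \<open>Take \<open>x \<in> W\<^sub>J\<close> minimizing \<open>len (w \<circ> x)\<close>.\<close>

lemma projP_decomp:
  assumes J: "J \<subseteq> \<Delta>" and w: "w \<in> W"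
  obtains x where "x \<in> gen_group J" "projP R \<Delta> J w \<in> min_coset_reps R \<Delta> J" "w = projP R \<Delta> J w \<circ> x"
proof -
  obtain x where x: "x \<in> gen_group J" "\<forall>y. y \<in> gen_group J \<longrightarrow> len \<Delta> (w \<circ> x) \<le> len \<Delta> (w \<circ> y)"
    using ex_has_least_nat[of "\<lambda>y. y \<in> gen_group J" id "\<lambda>y. len \<Delta> (w \<circ> y)"] by auto
  have "w \<circ> x \<in> min_coset_reps R \<Delta> J"
    unfolding min_coset_reps_def weyl_group_eq_W
  proof (intro CollectI conjI ballI)
    show "w \<circ> x \<in> W" using w x gen_group_mono[OF J] gen_group_comp by blast
    show "len \<Delta> (w \<circ> x) \<le> len \<Delta> (w \<circ> x \<circ> y)" if "y \<in> gen_group J" for y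
      using x gen_group_comp[OF x(1) that] by (simp add: comp_assoc)
  qed
  moreover from this have "projP R \<Delta> J w = w \<circ> x" using projP_eqI[OF J _ x(1)] by blast
  moreover have "w = (w \<circ> x) \<circ> inv x" using gen_group_inv(3)[OF x(1)] by (simp add: comp_assoc)
  ultimately show ?thesis using that gen_group_inv(1)[OF x(1)] by simp
qed

lemma len_projP_le:
  assumes J: "J \<subseteq> \<Delta>" and w: "w \<in> W"
  shows "len \<Delta> (projP R \<Delta> J w) \<le> len \<Delta> w"
proof -
  obtain x where "x \<in> gen_group J" "projP R \<Delta> J w \<in> min_coset_reps R \<Delta> J" "w = projP R \<Delta> J w \<circ> x"
    using projP_decomp[OF J w] .
  then show ?thesis using min_coset_reps_len_comp[OF J] by (metis le_add1)
qed

lemma min_coset_repsI_len_projP: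
  assumes J: "J \<subseteq> \<Delta>" and w: "w \<in> W" and len_eq: "len \<Delta> (projP R \<Delta> J w) = len \<Delta> w"
  shows "w \<in> min_coset_reps R \<Delta> J"
proof -
  obtain x where x: "x \<in> gen_group J" "projP R \<Delta> J w \<in> min_coset_reps R \<Delta> J" "w = projP R \<Delta> J w \<circ> x"
    using projP_decomp[OF J w] .
  then have "len \<Delta> x = 0" using min_coset_reps_len_comp[OF J x(2) x(1)] len_eq by simp
  then have "x = id" using len_eq_0_imp_id x(1) gen_group_mono[OF J] by blast
  then show ?thesis using x by simp
qed

abbreviation w0 :: "'a \<Rightarrow> 'a" where "w0 \<equiv> longest \<Delta> W"

lemma w0_in_W: "w0 \<in> W"
  using longest_parabolic(1)[of \<Delta>] by simp

lemma w0_w0 [simp]: "w0 (w0 x) = x"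
  using longest_parabolic_involution[of \<Delta>] by simp

lemma w0_pos_root: "b \<in> pos_roots \<Longrightarrow> w0 b \<notin> pos_roots"
  using root_automorphism_parabolic_neg[OF root_automorphism_W[OF w0_in_W] longest_parabolic(2)]
  by (simp add: parabolic_roots_simple pos_roots_in_R)

lemma w0_neg_root: "b \<in> R \<Longrightarrow> b \<notin> pos_roots \<Longrightarrow> w0 b \<in> pos_roots"
  using w0_pos_root[of "- b"] uminus_in_pos_roots_iff W_in_R[OF w0_in_W]
    root_automorphism_uminus[OF root_automorphism_W[OF w0_in_W]] by fastforce

text \<open>\<open>w0\<close> inverts exactly the positive roots not inverted by \<open>z\<close>.\<close>

lemma len_w0_comp:
  assumes z: "z \<in> W"
  shows "len \<Delta> (w0 \<circ> z) + len \<Delta> z = card pos_roots"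
proof -
  have "inversions (w0 \<circ> z) = pos_roots - inversions z"
    using w0_pos_root w0_neg_root W_in_R[OF z] pos_roots_in_R by (auto simp: inversions_def)
  then have "card (inversions (w0 \<circ> z)) = card pos_roots - card (inversions z)"
    using card_Diff_subset[OF finite_inversions inversions_subset] by simp
  moreover have "card (inversions z) \<le> card pos_roots"
    using card_mono[OF finite_pos_roots inversions_subset] .
  ultimately show ?thesis
    using len_eq_card_inversions z len_eq_card_inversions[OF gen_group_comp[OF w0_in_W z]] by simp
qed


section \<open>Bruhat covers and the \<open>P\<close>-Bruhat order\<close>

lemma len_inv:
  assumes w: "w \<in> W"
  shows "len \<Delta> (inv w) = len \<Delta> w"
proof -
  have le: "len \<Delta> (inv u) \<le> len \<Delta> u" if u: "u \<in> W" for u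
  proof -
    obtain ws where ws: "set ws \<subseteq> \<Delta>" "length ws = len \<Delta> u" "word ws = u" using u by (rule reduced_wordE)
    have "inv u = word (rev ws)" unfolding ws(3)[symmetric]
      by (rule inv_unique_comp[OF word_comp_rev word_rev_comp])
    then show ?thesis using len_le_length[of "rev ws"] ws by simp
  qed
  show ?thesis using le[OF w] le[OF gen_group_inv(1)[OF w]] w by simp
qed

lemma len_rrefl_comp_pos:
  assumes w: "w \<in> W" and g: "g \<in> \<Delta>" and pos: "inv w g \<in> pos_roots"
  shows "len \<Delta> (rrefl g \<circ> w) = len \<Delta> w + 1"
proof -
  have "len \<Delta> (rrefl g \<circ> w) = len \<Delta> (inv w \<circ> rrefl g)"
    using len_inv[OF gen_group_rrefl_comp[OF g w]] inv_rrefl_comp[OF w] by simp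
  then show ?thesis using len_comp_rrefl_pos[OF gen_group_inv(1)[OF w] g pos] len_inv[OF w] by simp
qed

lemma len_rrefl_comp_neg:
  assumes w: "w \<in> W" and g: "g \<in> \<Delta>" and neg: "inv w g \<notin> pos_roots"
  shows "len \<Delta> (rrefl g \<circ> w) + 1 = len \<Delta> w"
proof -
  have "len \<Delta> (rrefl g \<circ> w) = len \<Delta> (inv w \<circ> rrefl g)"
    using len_inv[OF gen_group_rrefl_comp[OF g w]] inv_rrefl_comp[OF w] by simp
  then show ?thesis using len_comp_rrefl_neg[OF gen_group_inv(1)[OF w] g neg] len_inv[OF w] by simp
qed

lemma bruhat_cover_len: "bruhat_cover R \<Delta> u v \<Longrightarrow> len \<Delta> v = len \<Delta> u + 1"
  by (simp add: bruhat_cover_def)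

lemma bruhat_cover_W: "bruhat_cover R \<Delta> u v \<Longrightarrow> u \<in> W \<and> v \<in> W"
  by (simp add: bruhat_cover_def weyl_group_eq_W)

lemma bruhat_le_len: "bruhat_le R \<Delta> u v \<Longrightarrow> u = v \<or> len \<Delta> u < len \<Delta> v"
  unfolding bruhat_le_def by (induction rule: rtranclp_induct) (auto dest: bruhat_cover_len)

lemma bruhat_lt_len: "bruhat_lt R \<Delta> u v \<Longrightarrow> len \<Delta> u < len \<Delta> v"
  using bruhat_le_len by (auto simp: bruhat_lt_def)

lemma bruhat_cover_comp_rrefl:
  assumes w: "w \<in> W" and b: "b \<in> R" and len_eq: "len \<Delta> (w \<circ> rrefl b) = len \<Delta> w + 1"
  shows "bruhat_cover R \<Delta> w (w \<circ> rrefl b)"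
  using w b len_eq gen_group_comp[OF w rrefl_root_in_W[OF b]]
  unfolding bruhat_cover_def weyl_group_eq_W by blast

lemma bruhat_cover_rrefl_comp:
  assumes w: "w \<in> W" and g: "g \<in> \<Delta>" and len_eq: "len \<Delta> (rrefl g \<circ> w) = len \<Delta> w + 1"
  shows "bruhat_cover R \<Delta> w (rrefl g \<circ> w)"
proof -
  let ?b = "inv w g"
  have b: "?b \<in> R" using W_in_R[OF gen_group_inv(1)[OF w]] g simple_subset_R by blast
  have "w \<circ> rrefl ?b = rrefl g \<circ> w"
    using orthogonal_transformation_comp_rrefl[OF orthogonal_transformation_gen_group[OF w]] w by simp
  then show ?thesis using bruhat_cover_comp_rrefl[OF w b] len_eq by simp
qed

lemma bruhat_le_comp_parabolic:
  assumes J: "J \<subseteq> \<Delta>" and p: "p \<in> min_coset_reps R \<Delta> J" and x: "x \<in> gen_group J"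
  shows "bruhat_le R \<Delta> p (p \<circ> x)"
  using x
proof (induction "len \<Delta> x" arbitrary: x)
  case 0
  then have "x = id" using len_eq_0_imp_id gen_group_mono[OF J] by (metis subsetD)
  then show ?case by (simp add: bruhat_le_def)
next
  case (Suc n)
  have xW: "x \<in> W" using Suc.prems gen_group_mono[OF J] by blast
  have "x \<noteq> id" using Suc.hyps(2) by auto
  then obtain a where a: "a \<in> J" "x a \<notin> pos_roots" using parabolic_eq_id[OF J Suc.prems] by blast
  let ?x' = "x \<circ> rrefl a"
  have x': "?x' \<in> gen_group J" using gen_group_comp_rrefl[OF Suc.prems a(1)] .
  have len_x': "len \<Delta> ?x' + 1 = len \<Delta> x" using len_comp_rrefl_neg[OF xW _ a(2)] a(1) J by blast
  then have "bruhat_le R \<Delta> p (p \<circ> ?x')" using Suc.hyps x' by simp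
  moreover have "len \<Delta> (p \<circ> ?x' \<circ> rrefl a) = len \<Delta> (p \<circ> ?x') + 1"
    using min_coset_reps_len_comp[OF J p Suc.prems] min_coset_reps_len_comp[OF J p x'] len_x'
    by (simp add: comp_assoc)
  then have "bruhat_cover R \<Delta> (p \<circ> ?x') (p \<circ> x)"
    using bruhat_cover_comp_rrefl[of "p \<circ> ?x'" a] gen_group_comp[OF min_coset_reps_W[OF J p]] x'
      gen_group_mono[OF J] a(1) J simple_subset_R by (force simp: comp_assoc)
  ultimately show ?case unfolding bruhat_le_def by auto
qed

text \<open>A Bruhat cover ending at a minimal coset representative is a \<open>P\<close>-cover: its lower end \<open>u\<close>
  projects to \<open>projP u \<le> u \<lessdot> y\<close>, which is shorter than \<open>y = projP y\<close>.\<close>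

lemma P_cover_to_min_coset_rep:
  assumes J: "J \<subseteq> \<Delta>" and y: "y \<in> min_coset_reps R \<Delta> J" and cover: "bruhat_cover R \<Delta> u y"
  shows "P_cover R \<Delta> J u y"
proof -
  have u: "u \<in> W" using bruhat_cover_W[OF cover] by blast
  obtain x where x: "x \<in> gen_group J" "projP R \<Delta> J u \<in> min_coset_reps R \<Delta> J" "u = projP R \<Delta> J u \<circ> x"
    using projP_decomp[OF J u] .
  have "bruhat_le R \<Delta> (projP R \<Delta> J u) u" using bruhat_le_comp_parabolic[OF J x(2,1)] x(3) by simp
  then have "bruhat_le R \<Delta> (projP R \<Delta> J u) y" using cover unfolding bruhat_le_def by auto
  moreover have "len \<Delta> (projP R \<Delta> J u) < len \<Delta> y" using len_projP_le[OF J u] bruhat_cover_len[OF cover] by simp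
  ultimately show ?thesis using cover projP_min_coset_rep[OF J y] by (auto simp: P_cover_def bruhat_lt_def)
qed

lemma P_cover_rrefl_comp:
  assumes J: "J \<subseteq> \<Delta>" and v: "v \<in> min_coset_reps R \<Delta> J" and g: "g \<in> \<Delta>"
    and gv: "rrefl g \<circ> v \<in> min_coset_reps R \<Delta> J" and len_gv: "len \<Delta> (rrefl g \<circ> v) = len \<Delta> v + 1"
    and x: "x \<in> gen_group J"
  shows "P_cover R \<Delta> J (v \<circ> x) (rrefl g \<circ> v \<circ> x)"
proof -
  have vW: "v \<in> W" using min_coset_reps_W[OF J v] .
  have vxW: "v \<circ> x \<in> W" using gen_group_comp[OF vW] x gen_group_mono[OF J] by blast
  have "len \<Delta> (rrefl g \<circ> (v \<circ> x)) = len \<Delta> (v \<circ> x) + 1"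
    using min_coset_reps_len_comp[OF J gv x] min_coset_reps_len_comp[OF J v x] len_gv
    by (simp add: comp_assoc)
  then have "bruhat_cover R \<Delta> (v \<circ> x) (rrefl g \<circ> v \<circ> x)"
    using bruhat_cover_rrefl_comp[OF vxW g] by (simp add: comp_assoc)
  moreover have "bruhat_lt R \<Delta> v (rrefl g \<circ> v)"
    using bruhat_cover_rrefl_comp[OF vW g len_gv] len_gv unfolding bruhat_lt_def bruhat_le_def by auto
  ultimately show ?thesis using projP_comp_parabolic[OF J v x] projP_comp_parabolic[OF J gv x]
    by (simp add: P_cover_def comp_assoc)
qed

lemma rrefl_comp_min_coset_rep:
  assumes J: "J \<subseteq> \<Delta>" and v: "v \<in> min_coset_reps R \<Delta> J" and g: "g \<in> \<Delta>"
    and pos: "inv v g \<in> pos_roots - parabolic_roots J"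
  shows "rrefl g \<circ> v \<in> min_coset_reps R \<Delta> J" and "len \<Delta> (rrefl g \<circ> v) = len \<Delta> v + 1"
proof -
  have vW: "v \<in> W" using min_coset_reps_W[OF J v] .
  show "len \<Delta> (rrefl g \<circ> v) = len \<Delta> v + 1" using len_rrefl_comp_pos[OF vW g] pos by blast
  have "v a \<noteq> g" if "a \<in> J" for a
    using that pos simple_in_parabolic_roots[OF _ J] gen_group_inv_apply[OF vW] by force
  then have "\<forall>a\<in>J. (rrefl g \<circ> v) a \<in> pos_roots"
    using rrefl_simple_pos_root[OF g min_coset_reps_pos[OF J v]] by simp
  then show "rrefl g \<circ> v \<in> min_coset_reps R \<Delta> J"
    using min_coset_reps_iff[OF J] gen_group_rrefl_comp[OF g vW] by blast
qed

lemma min_coset_rep_descent: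
  assumes J: "J \<subseteq> \<Delta>" and v: "v \<in> min_coset_reps R \<Delta> J" and ne: "v \<noteq> id"
  obtains g where "g \<in> \<Delta>" "rrefl g \<circ> v \<in> min_coset_reps R \<Delta> J" "len \<Delta> (rrefl g \<circ> v) + 1 = len \<Delta> v"
proof -
  have vW: "v \<in> W" using min_coset_reps_W[OF J v] .
  have "inv v \<noteq> id" using ne gen_group_inv(3)[OF vW] by auto
  then obtain g where g: "g \<in> \<Delta>" "inv v g \<notin> pos_roots" using W_eq_id[OF gen_group_inv(1)[OF vW]] by blast
  have "v a \<noteq> g" if "a \<in> J" for a
    using that g(2) simple_in_pos_roots J gen_group_inv_apply[OF vW] by force
  then have "\<forall>a\<in>J. (rrefl g \<circ> v) a \<in> pos_roots"
    using rrefl_simple_pos_root[OF g(1) min_coset_reps_pos[OF J v]] by simp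
  then have "rrefl g \<circ> v \<in> min_coset_reps R \<Delta> J"
    using min_coset_reps_iff[OF J] gen_group_rrefl_comp[OF g(1) vW] by blast
  then show ?thesis using that g len_rrefl_comp_neg[OF vW g] by blast
qed

lemma P_le_id_min_coset_rep:
  assumes J: "J \<subseteq> \<Delta>" and v: "v \<in> min_coset_reps R \<Delta> J"
  shows "P_le R \<Delta> J id v"
  using v
proof (induction "len \<Delta> v" arbitrary: v)
  case 0
  then have "v = id" using len_eq_0_imp_id min_coset_reps_W[OF J] by metis
  then show ?case by (simp add: P_le_def)
next
  case (Suc n)
  have "v \<noteq> id" using Suc.hyps(2) by auto
  then obtain g where g: "g \<in> \<Delta>" "rrefl g \<circ> v \<in> min_coset_reps R \<Delta> J"
    "len \<Delta> (rrefl g \<circ> v) + 1 = len \<Delta> v" using min_coset_rep_descent[OF J Suc.prems] by blast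
  then have "P_le R \<Delta> J id (rrefl g \<circ> v)" using Suc.hyps by simp
  moreover have "rrefl g \<circ> (rrefl g \<circ> v) = v" by (simp add: comp_assoc[symmetric])
  then have "bruhat_cover R \<Delta> (rrefl g \<circ> v) v"
    using bruhat_cover_rrefl_comp[OF min_coset_reps_W[OF J g(2)] g(1)] g(3) by simp
  then have "P_cover R \<Delta> J (rrefl g \<circ> v) v" using P_cover_to_min_coset_rep[OF J Suc.prems] by blast
  ultimately show ?case unfolding P_le_def by auto
qed

text \<open>That is, \<open>len u - len (projP u)\<close> does not increase along a \<open>P\<close>-chain.\<close>

lemma P_le_len:
  assumes J: "J \<subseteq> \<Delta>" and le: "P_le R \<Delta> J u v" and u: "u \<in> W"
  shows "v \<in> W \<and> len \<Delta> v + len \<Delta> (projP R \<Delta> J u) \<le> len \<Delta> (projP R \<Delta> J v) + len \<Delta> u"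
  using le unfolding P_le_def
proof (induction rule: rtranclp_induct)
  case (step y z)
  then have "bruhat_cover R \<Delta> y z" "len \<Delta> (projP R \<Delta> J y) < len \<Delta> (projP R \<Delta> J z)"
    using bruhat_lt_len by (auto simp: P_cover_def)
  then show ?case using step.IH bruhat_cover_len bruhat_cover_W by fastforce
qed (use u in simp)

lemma P_le_id_iff:
  assumes J: "J \<subseteq> \<Delta>" and u: "u \<in> W"
  shows "P_le R \<Delta> J id u \<longleftrightarrow> u \<in> min_coset_reps R \<Delta> J"
proof
  assume "P_le R \<Delta> J id u"
  then have "len \<Delta> u \<le> len \<Delta> (projP R \<Delta> J u)"
    using P_le_len[OF J _ gen_group_id] projP_min_coset_rep[OF J id_min_coset_rep[OF J]] by fastforce
  then show "u \<in> min_coset_reps R \<Delta> J"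
    using min_coset_repsI_len_projP[OF J u] len_projP_le[OF J u] by simp
qed (rule P_le_id_min_coset_rep[OF J])


lemma w0_comp_longest_eq:
  assumes J: "J \<subseteq> \<Delta>" and v: "v \<in> W" and w0_eq: "w0 = longest \<Delta> (gen_group J) \<circ> inv v"
  shows "v = w0 \<circ> longest \<Delta> (gen_group J)"
proof
  fix x
  let ?wJ = "longest \<Delta> (gen_group J)"
  have "?wJ x = ?wJ (inv v (w0 (?wJ x)))" using fun_cong[OF w0_eq, of "w0 (?wJ x)"] by simp
  then have "inv v (w0 (?wJ x)) = x" by (metis longest_parabolic_involution[OF J])
  then show "v x = (w0 \<circ> ?wJ) x" using gen_group_apply_inv[OF v] by (metis comp_apply)
qed

lemma longest_inv_simple_neg_if_no_ascent:
  assumes J: "J \<subseteq> \<Delta>" and v: "v \<in> min_coset_reps R \<Delta> J" and g: "g \<in> \<Delta>"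
    and no_ascent: "rrefl g \<circ> v \<in> min_coset_reps R \<Delta> J \<Longrightarrow> len \<Delta> (rrefl g \<circ> v) \<noteq> len \<Delta> v + 1"
  shows "longest \<Delta> (gen_group J) (inv v g) \<notin> pos_roots"
proof -
  let ?wJ = "longest \<Delta> (gen_group J)"
  have wJ: "?wJ \<in> gen_group J" and wJ_neg: "\<forall>a\<in>J. ?wJ a \<notin> pos_roots" using longest_parabolic[OF J] by auto
  have vW: "v \<in> W" using min_coset_reps_W[OF J v] .
  have v_aut: "root_automorphism v" using root_automorphism_W[OF vW] .
  show ?thesis
  proof (cases "inv v g \<in> pos_roots")
    case True
    then have "rrefl g \<circ> v \<notin> min_coset_reps R \<Delta> J" using no_ascent len_rrefl_comp_pos[OF vW g] by blast
    then obtain a where a: "a \<in> J" "rrefl g (v a) \<notin> pos_roots"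
      using min_coset_reps_iff[OF J] gen_group_rrefl_comp[OF g vW] by auto
    then have "v a = g" using rrefl_simple_pos_root_neg[OF g min_coset_reps_pos[OF J v a(1)]] by simp
    then show ?thesis using wJ_neg a(1) gen_group_inv_apply[OF vW, of a] by simp
  next
    case False
    have "inv v g \<in> R" using W_in_R[OF gen_group_inv(1)[OF vW]] g simple_subset_R by blast
    then have neg: "- inv v g \<in> pos_roots" using False uminus_in_pos_roots_iff by blast
    have "- inv v g \<notin> parabolic_roots J"
    proof
      assume "- inv v g \<in> parabolic_roots J"
      then have "v (- inv v g) \<in> pos_roots"
        using root_automorphism_parabolic_pos[OF v_aut _ neg] min_coset_reps_pos[OF J v] by blast
      then show False
        using root_automorphism_uminus[OF v_aut] gen_group_apply_inv[OF vW]
          uminus_pos_root_notin[OF simple_in_pos_roots[OF g]] by simp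
    qed
    then have "?wJ (- inv v g) \<in> pos_roots" using parabolic_pos_root_outside[OF J wJ] neg by blast
    then show ?thesis
      using root_automorphism_uminus[OF root_automorphism_W] wJ gen_group_mono[OF J] uminus_pos_root_notin
      by fastforce
  qed
qed

text \<open>Without an ascent, \<open>w\<^sub>J \<circ> inv v\<close> makes every simple root negative, so it is \<open>w0\<close>.\<close>

lemma min_coset_rep_ascent:
  assumes J: "J \<subseteq> \<Delta>" and v: "v \<in> min_coset_reps R \<Delta> J" and ne: "v \<noteq> w0 \<circ> longest \<Delta> (gen_group J)"
  obtains g where "g \<in> \<Delta>" "rrefl g \<circ> v \<in> min_coset_reps R \<Delta> J" "len \<Delta> (rrefl g \<circ> v) = len \<Delta> v + 1"
proof (rule ccontr)
  assume no_ascent: "\<not> thesis"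
  note ascent = that
  let ?wJ = "longest \<Delta> (gen_group J)"
  have vW: "v \<in> W" using min_coset_reps_W[OF J v] .
  have "(?wJ \<circ> inv v) g \<notin> pos_roots" if g: "g \<in> \<Delta>" for g
  proof -
    have "rrefl g \<circ> v \<in> min_coset_reps R \<Delta> J \<Longrightarrow> len \<Delta> (rrefl g \<circ> v) \<noteq> len \<Delta> v + 1"
      using no_ascent ascent[OF g] by blast
    then show ?thesis using longest_inv_simple_neg_if_no_ascent[OF J v g] by simp
  qed
  then have "w0 = ?wJ \<circ> inv v"
    using longest_parabolic_eqI[OF order_refl gen_group_comp[OF _ gen_group_inv(1)[OF vW]]]
      longest_parabolic(1)[OF J] gen_group_mono[OF J] by blast
  then show False using w0_comp_longest_eq[OF J vW] ne by blast
qed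

lemma P_le_top:
  assumes J: "J \<subseteq> \<Delta>" and v: "v \<in> min_coset_reps R \<Delta> J"
  shows "P_le R \<Delta> J v (w0 \<circ> longest \<Delta> (gen_group J))"
  using v
proof (induction "card pos_roots - len \<Delta> v" arbitrary: v rule: less_induct)
  case less
  show ?case
  proof (cases "v = w0 \<circ> longest \<Delta> (gen_group J)")
    case False
    then obtain g where g: "g \<in> \<Delta>" "rrefl g \<circ> v \<in> min_coset_reps R \<Delta> J"
      "len \<Delta> (rrefl g \<circ> v) = len \<Delta> v + 1" using min_coset_rep_ascent[OF J less.prems] by blast
    have "len \<Delta> (rrefl g \<circ> v) \<le> card pos_roots" using len_le_card_pos_roots min_coset_reps_W[OF J g(2)] by blast
    then have "P_le R \<Delta> J (rrefl g \<circ> v) (w0 \<circ> longest \<Delta> (gen_group J))"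
      using less.hyps g by simp
    moreover have "P_cover R \<Delta> J v (rrefl g \<circ> v)"
      using P_cover_to_min_coset_rep[OF J g(2) bruhat_cover_rrefl_comp[OF min_coset_reps_W[OF J less.prems] g(1,3)]] .
    ultimately show ?thesis unfolding P_le_def by (meson converse_rtranclp_into_rtranclp)
  qed (simp add: P_le_def)
qed


section \<open>Connectedness of the Dynkin diagram\<close>

text \<open>\<open>dynkin_reach J n\<close> is the set of simple roots at distance less than \<open>n\<close> from \<open>\<Delta> - J\<close> in the
  Dynkin diagram, whose edges join non-orthogonal simple roots.\<close>

fun dynkin_reach :: "'a set \<Rightarrow> nat \<Rightarrow> 'a set" where
  "dynkin_reach J 0 = {}"
| "dynkin_reach J (Suc n) = (\<Delta> - J) \<union> dynkin_reach J n \<union> {d \<in> \<Delta>. \<exists>c\<in>dynkin_reach J n. d \<bullet> c \<noteq> 0}"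

lemma dynkin_reach_subset: "dynkin_reach J n \<subseteq> \<Delta>"
  by (induction n) auto

lemma dynkin_reach_mono: "dynkin_reach J n \<subseteq> dynkin_reach J (Suc n)"
  by auto

lemma W_span_invariant:
  assumes \<Delta>1: "\<Delta>1 \<subseteq> \<Delta>" and orth: "\<And>a b. a \<in> \<Delta>1 \<Longrightarrow> b \<in> \<Delta> - \<Delta>1 \<Longrightarrow> a \<bullet> b = 0"
    and w: "w \<in> W" and x: "x \<in> span \<Delta>1"
  shows "w x \<in> span \<Delta>1"
proof -
  obtain ws where ws: "set ws \<subseteq> \<Delta>" "w = word ws" using w by (rule gen_groupE)
  have "word ws x \<in> span \<Delta>1" using ws(1)
  proof (induction ws)
    case (Cons c ws)
    then have c: "c \<in> \<Delta>" and IH: "word ws x \<in> span \<Delta>1" by auto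
    show ?case
    proof (cases "c \<in> \<Delta>1")
      case True
      then show ?thesis using IH by (simp add: rrefl_def span_diff span_scale span_base)
    next
      case False
      then have "word ws x \<bullet> c = 0" using span_orthogonal[of \<Delta>1 "{c}", OF _ IH span_base] orth c by auto
      then show ?thesis using IH by (simp add: rrefl_orthogonal)
    qed
  qed (use x in simp)
  then show ?thesis using ws by simp
qed

text \<open>Every root is \<open>\<plusminus>w a\<close> for a simple root \<open>a\<close>, and \<open>W\<close> preserves the span of each of two mutually
  orthogonal parts of \<open>\<Delta>\<close>; so such a splitting of \<open>\<Delta>\<close> splits \<open>R\<close>.\<close>

lemma orthogonal_split_imp_not_irreducible:
  assumes \<Delta>1: "\<Delta>1 \<subseteq> \<Delta>" "\<Delta>1 \<noteq> {}" "\<Delta> - \<Delta>1 \<noteq> {}"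
    and orth: "\<And>a b. a \<in> \<Delta>1 \<Longrightarrow> b \<in> \<Delta> - \<Delta>1 \<Longrightarrow> a \<bullet> b = 0"
  shows "\<not> irreducible_rs R"
proof -
  have orth': "a \<bullet> b = 0" if "a \<in> \<Delta> - \<Delta>1" "b \<in> \<Delta> - (\<Delta> - \<Delta>1)" for a b
    using orth[of b a] that \<Delta>1(1) by (auto simp: inner_commute)
  let ?R1 = "R \<inter> span \<Delta>1" and ?R2 = "R \<inter> span (\<Delta> - \<Delta>1)"
  have "b \<in> ?R1 \<union> ?R2" if b: "b \<in> R" for b
  proof -
    obtain w a where wa: "w \<in> W" "a \<in> \<Delta>" "b = w a \<or> b = - w a" using root_W_conj_simple[OF b] .
    have "w a \<in> span \<Delta>1 \<or> w a \<in> span (\<Delta> - \<Delta>1)"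
    proof (cases "a \<in> \<Delta>1")
      case True
      then show ?thesis using W_span_invariant[OF \<Delta>1(1) orth wa(1) span_base] by blast
    next
      case False
      then show ?thesis using W_span_invariant[of "\<Delta> - \<Delta>1", OF Diff_subset orth' wa(1) span_base] wa(2) by blast
    qed
    then show ?thesis using wa(3) b span_neg by auto
  qed
  then have U: "?R1 \<union> ?R2 = R" by blast
  have "x = 0" if "x \<in> ?R1" "x \<in> ?R2" for x
    using span_orthogonal[of \<Delta>1 "\<Delta> - \<Delta>1", OF orth, where x = x and y = x] that by simp
  then have I: "?R1 \<inter> ?R2 = {}" using zero_notin_R by blast
  obtain a1 a2 where "a1 \<in> \<Delta>1" "a2 \<in> \<Delta> - \<Delta>1" using \<Delta>1(2,3) by blast
  then have N1: "?R1 \<noteq> {}" and N2: "?R2 \<noteq> {}"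
    using \<Delta>1(1) simple_subset_R span_base[of a1 \<Delta>1] span_base[of a2 "\<Delta> - \<Delta>1"] by auto
  have O: "\<forall>a\<in>?R1. \<forall>b\<in>?R2. a \<bullet> b = 0" using span_orthogonal[of \<Delta>1 "\<Delta> - \<Delta>1", OF orth] by blast
  have "\<exists>R1 R2. R1 \<noteq> {} \<and> R2 \<noteq> {} \<and> R1 \<union> R2 = R \<and> R1 \<inter> R2 = {} \<and> (\<forall>a\<in>R1. \<forall>b\<in>R2. a \<bullet> b = 0)"
    by (intro exI[of _ ?R1] exI[of _ ?R2] conjI N1 N2 U I O)
  then show ?thesis unfolding irreducible_rs_def by blast
qed

lemma dynkin_reach_exhausts:
  assumes irr: "irreducible_rs R" and J: "J \<subseteq> \<Delta>" "J \<noteq> \<Delta>" and a: "a \<in> \<Delta>"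
  obtains n where "a \<in> dynkin_reach J n"
proof (rule ccontr)
  assume not_reached: "\<not> thesis"
  let ?U = "\<Union>n. dynkin_reach J n"
  have "\<Delta> - J \<subseteq> dynkin_reach J (Suc 0)" by simp
  then have "?U \<noteq> {}" using J by blast
  moreover have "\<Delta> - ?U \<noteq> {}" using not_reached that a by blast
  moreover have "x \<bullet> y = 0" if x: "x \<in> ?U" and y: "y \<in> \<Delta> - ?U" for x y
  proof -
    obtain n where n: "x \<in> dynkin_reach J n" using x by blast
    show ?thesis
    proof (rule ccontr)
      assume "x \<bullet> y \<noteq> 0"
      then have "y \<in> dynkin_reach J (Suc n)" using n y by (auto simp: inner_commute)
      then show False using y by blast
    qed
  qed
  moreover have "?U \<subseteq> \<Delta>" using dynkin_reach_subset by blast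
  ultimately show False using orthogonal_split_imp_not_irreducible[of ?U] irr by blast
qed

lemma dynkin_reach_entry:
  assumes irr: "irreducible_rs R" and J: "J \<subseteq> \<Delta>" "J \<noteq> \<Delta>" and \<alpha>: "\<alpha> \<in> J"
  obtains n c where "c \<in> dynkin_reach J (Suc n) - dynkin_reach J n" "\<alpha> \<bullet> c \<noteq> 0"
    "\<alpha> \<notin> dynkin_reach J (Suc n)"
proof -
  obtain m where "\<alpha> \<in> dynkin_reach J m" using dynkin_reach_exhausts[OF irr J] \<alpha> J(1) by blast
  then obtain m where m: "\<alpha> \<in> dynkin_reach J m" "\<forall>k<m. \<alpha> \<notin> dynkin_reach J k"
    using exists_least_iff[of "\<lambda>m. \<alpha> \<in> dynkin_reach J m"] by blast
  have "m \<noteq> 0" using m(1) by (cases m) auto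
  moreover have "m \<noteq> Suc 0"
  proof
    assume "m = Suc 0"
    then show False using m(1) \<alpha> by simp
  qed
  ultimately obtain n where n: "m = Suc (Suc n)" by (metis not0_implies_Suc)
  then have "\<alpha> \<notin> dynkin_reach J (Suc n)" using m(2) by (simp del: dynkin_reach.simps)
  moreover obtain c where "c \<in> dynkin_reach J (Suc n)" "\<alpha> \<bullet> c \<noteq> 0"
    using m(1) n \<alpha> calculation by auto
  moreover from calculation have "c \<notin> dynkin_reach J n" using \<alpha> J(1) by auto
  ultimately show ?thesis using that by blast
qed


section \<open>Climbing from \<open>s\<^sub>\<alpha>\<close>, \<open>\<alpha> \<in> J\<close>, to \<open>w0 \<circ> w\<^sub>J\<close>\<close>

lemma P_le_chain_extend:
  assumes J: "J \<subseteq> \<Delta>" and v: "v \<in> min_coset_reps R \<Delta> J" and c: "c \<in> \<Delta>"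
    and c_pos: "inv v c \<in> pos_roots - parabolic_roots J"
    and chain: "\<forall>x\<in>gen_group J. P_le R \<Delta> J x (v \<circ> x)"
  shows "\<forall>x\<in>gen_group J. P_le R \<Delta> J x (rrefl c \<circ> v \<circ> x)"
proof
  fix x assume x: "x \<in> gen_group J"
  have "P_cover R \<Delta> J (v \<circ> x) (rrefl c \<circ> v \<circ> x)"
    using P_cover_rrefl_comp[OF J v c rrefl_comp_min_coset_rep[OF J v c c_pos] x] .
  then show "P_le R \<Delta> J x (rrefl c \<circ> v \<circ> x)" using chain x unfolding P_le_def by auto
qed

text \<open>If \<open>d \<in> J\<close> is fixed by \<open>v\<close> and joined to \<open>c\<close> in the Dynkin diagram, then \<open>s\<^sub>c d = d - k c\<close> with
  \<open>k < 0\<close>, so \<open>inv v (s\<^sub>c d) = d - k (inv v c)\<close> inherits from \<open>inv v c\<close> a positive coordinate outside \<open>J\<close>.\<close>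

lemma inv_rrefl_neighbour_outside:
  assumes J: "J \<subseteq> \<Delta>" and v: "v \<in> W" and d: "d \<in> J" and c: "c \<in> \<Delta>" and dc: "d \<bullet> c \<noteq> 0"
    and fix_d: "inv v d = d" and c_pos: "inv v c \<in> pos_roots - parabolic_roots J"
  shows "inv v (rrefl c d) \<in> pos_roots - parabolic_roots J"
proof -
  let ?r = "inv v c"
  have dD: "d \<in> \<Delta>" using d J by auto
  have iv: "inv v \<in> W" using gen_group_inv(1)[OF v] .
  have "d \<noteq> c" using fix_d c_pos simple_in_parabolic_roots[OF d J] by auto
  then have "d \<bullet> c < 0" using simple_roots_inner_nonpos[OF dD c] dc by simp
  then have k: "2 * (d \<bullet> c) / (c \<bullet> c) < 0" using simple_nonzero[OF c] by (simp add: divide_neg_pos)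
  have eq: "inv v (rrefl c d) = d - (2 * (d \<bullet> c) / (c \<bullet> c)) *\<^sub>R ?r"
    using linear_gen_group[OF iv] fix_d by (simp add: rrefl_def linear_diff linear_scale)
  obtain a where a: "a \<in> \<Delta> - J" "coord ?r a \<noteq> 0"
    using c_pos pos_roots_in_R by (auto simp: parabolic_roots_def)
  then have "coord ?r a > 0" using c_pos by (force simp: pos_roots_def)
  moreover have "coord d a = 0" using a dD d coord_simple[of d a] by auto
  ultimately have pos: "coord (inv v (rrefl c d)) a > 0"
    using mult_neg_pos[OF k, of "coord ?r a"] by (simp add: eq)
  have "inv v (rrefl c d) \<in> R" using W_in_R[OF iv] rrefl_in_R c dD simple_subset_R by auto
  then show ?thesis using pos_rootI_coord[OF _ _ pos] coord_notin_parabolic_roots[OF a(1)] pos a(1) by force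
qed

text \<open>Walking along a shortest path of the Dynkin diagram from \<open>\<Delta> - J\<close> to \<open>b\<close> gives a minimal coset
  representative \<open>v\<close>, built from the earlier vertices of the path, with \<open>inv v b\<close> positive outside
  \<open>J\<close> and \<open>x \<le>\<^sub>P v \<circ> x\<close> for all \<open>x \<in> W\<^sub>J\<close>.\<close>

lemma dynkin_reach_chain:
  assumes J: "J \<subseteq> \<Delta>"
  shows "b \<in> dynkin_reach J (Suc n) - dynkin_reach J n \<Longrightarrow>
    \<exists>v. v \<in> min_coset_reps R \<Delta> J \<and> v \<in> gen_group (dynkin_reach J n)
      \<and> inv v b \<in> pos_roots - parabolic_roots J \<and> (\<forall>x\<in>gen_group J. P_le R \<Delta> J x (v \<circ> x))"
proof (induction n arbitrary: b)
  case 0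
  then have "b \<in> \<Delta> - J" by simp
  then have "inv id b \<in> pos_roots - parabolic_roots J"
    using simple_in_pos_roots simple_notin_parabolic_roots by (simp add: inv_id)
  moreover have "\<forall>x\<in>gen_group J. P_le R \<Delta> J x (id \<circ> x)" by (simp add: P_le_def)
  ultimately show ?case using id_min_coset_rep[OF J] gen_group_id by blast
next
  case (Suc n)
  have bD: "b \<in> \<Delta>" and bJ: "b \<in> J" using Suc.prems dynkin_reach_subset by auto
  obtain c where c: "c \<in> dynkin_reach J (Suc n) - dynkin_reach J n" "b \<bullet> c \<noteq> 0"
    using Suc.prems bD by auto
  have cD: "c \<in> \<Delta>" using c dynkin_reach_subset by blast
  obtain v where v: "v \<in> min_coset_reps R \<Delta> J" "v \<in> gen_group (dynkin_reach J n)"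
    "inv v c \<in> pos_roots - parabolic_roots J" "\<forall>x\<in>gen_group J. P_le R \<Delta> J x (v \<circ> x)"
    using Suc.IH[OF c(1)] by blast
  have vW: "v \<in> W" using min_coset_reps_W[OF J v(1)] .
  have "b \<bullet> d = 0" if "d \<in> dynkin_reach J n" for d using that Suc.prems bD by auto
  then have "inv v b = b" using gen_group_orthogonal[OF gen_group_inv(1)[OF v(2)]] by blast
  then have "inv (rrefl c \<circ> v) b \<in> pos_roots - parabolic_roots J"
    using inv_rrefl_neighbour_outside[OF J vW bJ cD c(2) _ v(3)] inv_rrefl_comp[OF vW] by simp
  moreover have "rrefl c \<circ> v \<in> gen_group (dynkin_reach J (Suc n))"
    using gen_group_rrefl_comp[OF c(1)[THEN DiffD1]] v(2) gen_group_mono[OF dynkin_reach_mono] by blast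
  ultimately show ?case
    using rrefl_comp_min_coset_rep(1)[OF J v(1) cD v(3)] P_le_chain_extend[OF J v(1) cD v(3,4)]
    by blast
qed

text \<open>When \<open>v\<close> fixes \<open>\<alpha>\<close>, \<open>v \<circ> s\<^sub>\<alpha> \<circ> s\<^bsub>inv v c\<^esub> = s\<^sub>\<alpha> \<circ> s\<^sub>c \<circ> v\<close>, and \<open>s\<^sub>\<alpha> \<circ> s\<^sub>c \<circ> v\<close> lies two
  length steps above \<open>v\<close> inside \<open>W\<^sup>J\<close> (the second step by \<open>inv_rrefl_neighbour_outside\<close>); so
  \<open>v \<circ> s\<^sub>\<alpha> \<lessdot> s\<^sub>\<alpha> \<circ> s\<^sub>c \<circ> v\<close> is a cover ending in \<open>W\<^sup>J\<close>.\<close>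

lemma P_cover_rrefl_neighbour:
  assumes J: "J \<subseteq> \<Delta>" and v: "v \<in> min_coset_reps R \<Delta> J" and c: "c \<in> \<Delta>"
    and c_pos: "inv v c \<in> pos_roots - parabolic_roots J"
    and \<alpha>: "\<alpha> \<in> J" "\<alpha> \<bullet> c \<noteq> 0" and fix_\<alpha>: "v \<alpha> = \<alpha>"
  shows "rrefl \<alpha> \<circ> rrefl c \<circ> v \<in> min_coset_reps R \<Delta> J"
    and "P_cover R \<Delta> J (v \<circ> rrefl \<alpha>) (rrefl \<alpha> \<circ> rrefl c \<circ> v)"
proof -
  have vW: "v \<in> W" using min_coset_reps_W[OF J v] .
  have \<alpha>D: "\<alpha> \<in> \<Delta>" using \<alpha> J by auto
  have inv_fix: "inv v \<alpha> = \<alpha>" using fix_\<alpha> gen_group_inv_apply[OF vW, of \<alpha>] by simp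
  note cv = rrefl_comp_min_coset_rep[OF J v c c_pos]
  have "inv (rrefl c \<circ> v) \<alpha> \<in> pos_roots - parabolic_roots J"
    using inv_rrefl_neighbour_outside[OF J vW \<alpha>(1) c _ inv_fix c_pos] \<alpha>(2) inv_rrefl_comp[OF vW]
    by (simp add: inner_commute)
  note acv = rrefl_comp_min_coset_rep[OF J cv(1) \<alpha>D this]
  then show "rrefl \<alpha> \<circ> rrefl c \<circ> v \<in> min_coset_reps R \<Delta> J" by (simp add: comp_assoc)
  let ?r = "inv v c"
  have ot: "orthogonal_transformation v" using orthogonal_transformation_gen_group[OF vW] .
  have eq: "v \<circ> rrefl \<alpha> \<circ> rrefl ?r = rrefl \<alpha> \<circ> rrefl c \<circ> v"
    using orthogonal_transformation_comp_rrefl[OF ot, of \<alpha>] orthogonal_transformation_comp_rrefl[OF ot, of ?r]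
      fix_\<alpha> gen_group_apply_inv[OF vW] by (simp add: comp_assoc)
  have "len \<Delta> (v \<circ> rrefl \<alpha>) = len \<Delta> v + 1"
    using len_comp_rrefl_pos[OF vW \<alpha>D] fix_\<alpha> simple_in_pos_roots[OF \<alpha>D] by simp
  then have "len \<Delta> (v \<circ> rrefl \<alpha> \<circ> rrefl ?r) = len \<Delta> (v \<circ> rrefl \<alpha>) + 1"
    unfolding eq using cv(2) acv(2) by (simp add: comp_assoc)
  then have "bruhat_cover R \<Delta> (v \<circ> rrefl \<alpha>) (rrefl \<alpha> \<circ> rrefl c \<circ> v)"
    using bruhat_cover_comp_rrefl[OF gen_group_comp_rrefl[OF vW \<alpha>D]] eq c_pos pos_roots_in_R by fastforce
  then show "P_cover R \<Delta> J (v \<circ> rrefl \<alpha>) (rrefl \<alpha> \<circ> rrefl c \<circ> v)"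
    using P_cover_to_min_coset_rep[OF J] acv(1) by (simp add: comp_assoc)
qed

lemma P_le_rrefl_parabolic_top:
  assumes irr: "irreducible_rs R" and J: "J \<subseteq> \<Delta>" "J \<noteq> \<Delta>" and \<alpha>: "\<alpha> \<in> J"
  shows "P_le R \<Delta> J (rrefl \<alpha>) (w0 \<circ> longest \<Delta> (gen_group J))"
proof -
  obtain n c where c: "c \<in> dynkin_reach J (Suc n) - dynkin_reach J n" "\<alpha> \<bullet> c \<noteq> 0"
    and \<alpha>_out: "\<alpha> \<notin> dynkin_reach J (Suc n)"
    using dynkin_reach_entry[OF irr J \<alpha>] .
  obtain v where v: "v \<in> min_coset_reps R \<Delta> J" "v \<in> gen_group (dynkin_reach J n)"
    "inv v c \<in> pos_roots - parabolic_roots J" "\<forall>x\<in>gen_group J. P_le R \<Delta> J x (v \<circ> x)"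
    using dynkin_reach_chain[OF J(1) c(1)] by blast
  have cD: "c \<in> \<Delta>" using c dynkin_reach_subset by blast
  have "\<alpha> \<bullet> d = 0" if "d \<in> dynkin_reach J n" for d using that \<alpha>_out \<alpha> J(1) by auto
  then have "v \<alpha> = \<alpha>" using gen_group_orthogonal[OF v(2)] by blast
  note step = P_cover_rrefl_neighbour[OF J(1) v(1) cD v(3) \<alpha> c(2) this]
  have "P_le R \<Delta> J (rrefl \<alpha>) (v \<circ> rrefl \<alpha>)" using v(4) gen_group_rrefl[OF \<alpha>] by blast
  moreover have "P_le R \<Delta> J (rrefl \<alpha> \<circ> rrefl c \<circ> v) (w0 \<circ> longest \<Delta> (gen_group J))"
    using P_le_top[OF J(1) step(1)] .
  ultimately show ?thesis using step(2) unfolding P_le_def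
    by (meson rtranclp.rtrancl_into_rtrancl rtranclp_trans)
qed


lemma len_rrefl_simple: "a \<in> \<Delta> \<Longrightarrow> len \<Delta> (rrefl a) = 1"
  using len_comp_rrefl_pos[OF gen_group_id, of a] simple_in_pos_roots by simp

lemma len_eq_1E:
  assumes w: "w \<in> W" and "len \<Delta> w = 1"
  obtains a where "a \<in> \<Delta>" "w = rrefl a"
proof -
  obtain ws where ws: "set ws \<subseteq> \<Delta>" "length ws = 1" "word ws = w" using reduced_wordE[OF w] assms(2) by metis
  then obtain a where "ws = [a]" by (cases ws) auto
  then show ?thesis using ws that by auto
qed

lemma bruhat_cover_id_iff:
  assumes u: "u \<in> W"
  shows "bruhat_cover R \<Delta> id u \<longleftrightarrow> (\<exists>\<alpha>\<in>\<Delta>. u = rrefl \<alpha>)"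
proof
  assume "bruhat_cover R \<Delta> id u"
  then have "len \<Delta> u = 1" using bruhat_cover_len by fastforce
  then show "\<exists>\<alpha>\<in>\<Delta>. u = rrefl \<alpha>" using len_eq_1E[OF u] by metis
next
  assume "\<exists>\<alpha>\<in>\<Delta>. u = rrefl \<alpha>"
  then obtain \<alpha> where "\<alpha> \<in> \<Delta>" "u = rrefl \<alpha>" by blast
  then show "bruhat_cover R \<Delta> id u"
    using bruhat_cover_comp_rrefl[OF gen_group_id, of \<alpha>] len_rrefl_simple simple_subset_R by auto
qed

lemma P_le_rrefl_simple_top:
  assumes irr: "irreducible_rs R" and J: "J \<subseteq> \<Delta>" "J \<noteq> \<Delta>" and \<alpha>: "\<alpha> \<in> \<Delta>"
  shows "P_le R \<Delta> J (rrefl \<alpha>) (w0 \<circ> longest \<Delta> (gen_group J))"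
proof (cases "\<alpha> \<in> J")
  case True
  then show ?thesis using P_le_rrefl_parabolic_top[OF irr J] by blast
next
  case False
  then have "\<forall>a\<in>J. rrefl \<alpha> a \<in> pos_roots"
    using rrefl_simple_pos_root[OF \<alpha> simple_in_pos_roots] J(1) by blast
  then have "rrefl \<alpha> \<in> min_coset_reps R \<Delta> J" using min_coset_reps_iff[OF J(1)] gen_group_rrefl[OF \<alpha>] by blast
  then show ?thesis using P_le_top[OF J(1)] by blast
qed

theorem bruhat_cover_id_P_le_top_iff:
  assumes "irreducible_rs R" and "J \<subseteq> \<Delta>" "J \<noteq> \<Delta>" and "u \<in> W"
  shows "(bruhat_cover R \<Delta> id u \<and> P_le R \<Delta> J u (w0 \<circ> longest \<Delta> (gen_group J))) \<longleftrightarrow> (\<exists>\<alpha>\<in>\<Delta>. u = rrefl \<alpha>)"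
  using bruhat_cover_id_iff[OF assms(4)] P_le_rrefl_simple_top[OF assms(1-3)] by blast

lemma len_w0_longest:
  assumes J: "J \<subseteq> \<Delta>"
  shows "len \<Delta> (w0 \<circ> longest \<Delta> (gen_group J)) + len \<Delta> (longest \<Delta> (gen_group J)) = card pos_roots"
  using len_w0_comp longest_parabolic(1)[OF J] gen_group_mono[OF J] by blast

lemma w0_rrefl_longest_min_coset_rep:
  assumes J: "J \<subseteq> \<Delta>" and \<alpha>: "\<alpha> \<in> \<Delta> - J"
  shows "w0 \<circ> rrefl \<alpha> \<circ> longest \<Delta> (gen_group J) \<in> min_coset_reps R \<Delta> J"
proof -
  let ?wJ = "longest \<Delta> (gen_group J)"
  have wJ: "?wJ \<in> gen_group J" and wJ_neg: "\<forall>a\<in>J. ?wJ a \<notin> pos_roots" using longest_parabolic[OF J] by auto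
  have "w0 (rrefl \<alpha> (?wJ a)) \<in> pos_roots" if a: "a \<in> J" for a
  proof -
    have wJa: "?wJ a \<in> parabolic_roots J"
      using gen_group_parabolic_roots[OF J wJ simple_in_parabolic_roots[OF a J]] .
    then have "- ?wJ a \<in> pos_roots" using uminus_in_pos_roots_iff wJ_neg a by (auto simp: parabolic_roots_def)
    moreover have "- ?wJ a \<noteq> \<alpha>" using uminus_parabolic_roots[OF wJa] simple_notin_parabolic_roots[OF \<alpha>] by auto
    ultimately have "rrefl \<alpha> (?wJ a) \<notin> pos_roots"
      using rrefl_simple_pos_root[of \<alpha> "- ?wJ a"] \<alpha> uminus_pos_root_notin by (auto simp: rrefl_uminus)
    moreover have "rrefl \<alpha> (?wJ a) \<in> R" using rrefl_in_R \<alpha> simple_subset_R wJa by (auto simp: parabolic_roots_def)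
    ultimately show ?thesis using w0_neg_root by blast
  qed
  moreover have "w0 \<circ> rrefl \<alpha> \<circ> ?wJ \<in> W"
    using gen_group_comp[OF gen_group_comp_rrefl[OF w0_in_W] ] wJ gen_group_mono[OF J] \<alpha> by blast
  ultimately show ?thesis using min_coset_reps_iff[OF J] by simp
qed

lemma len_w0_comp_comp_longest:
  assumes J: "J \<subseteq> \<Delta>" and u: "u \<in> min_coset_reps R \<Delta> J"
  shows "len \<Delta> (w0 \<circ> u \<circ> longest \<Delta> (gen_group J)) + len \<Delta> u + len \<Delta> (longest \<Delta> (gen_group J))
    = card pos_roots"
proof -
  let ?wJ = "longest \<Delta> (gen_group J)"
  have wJ: "?wJ \<in> gen_group J" using longest_parabolic(1)[OF J] .
  have "len \<Delta> (w0 \<circ> (u \<circ> ?wJ)) + len \<Delta> (u \<circ> ?wJ) = card pos_roots"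
    using len_w0_comp gen_group_comp[OF min_coset_reps_W[OF J u]] wJ gen_group_mono[OF J] by blast
  then show ?thesis using min_coset_reps_len_comp[OF J u wJ] by (simp add: comp_assoc)
qed

text \<open>By the length formulas, \<open>u \<lessdot> w0 \<circ> w\<^sub>J\<close> forces \<open>w0 \<circ> u \<circ> w\<^sub>J\<close> to have length one.\<close>

lemma bruhat_cover_top_imp:
  assumes J: "J \<subseteq> \<Delta>" and u: "u \<in> min_coset_reps R \<Delta> J"
    and cover: "bruhat_cover R \<Delta> u (w0 \<circ> longest \<Delta> (gen_group J))"
  obtains \<alpha> where "\<alpha> \<in> \<Delta> - J" "u = w0 \<circ> rrefl \<alpha> \<circ> longest \<Delta> (gen_group J)"
proof -
  let ?wJ = "longest \<Delta> (gen_group J)"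
  have wJ: "?wJ \<in> gen_group J" and wJW: "?wJ \<in> W" using longest_parabolic(1)[OF J] gen_group_mono[OF J] by auto
  have wJ_wJ: "?wJ \<circ> ?wJ = id" using longest_parabolic_involution[OF J] by (simp add: fun_eq_iff)
  have uW: "u \<in> W" using min_coset_reps_W[OF J u] .
  have len_top: "len \<Delta> (w0 \<circ> ?wJ) = len \<Delta> u + 1" using bruhat_cover_len[OF cover] .
  then have "len \<Delta> (w0 \<circ> u \<circ> ?wJ) = 1"
    using len_w0_comp_comp_longest[OF J u] len_w0_longest[OF J] by simp
  then obtain \<alpha> where \<alpha>: "\<alpha> \<in> \<Delta>" "w0 \<circ> u \<circ> ?wJ = rrefl \<alpha>"
    using len_eq_1E gen_group_comp[OF gen_group_comp[OF w0_in_W uW] wJW] by metis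
  then have u_\<alpha>: "u = w0 \<circ> rrefl \<alpha> \<circ> ?wJ" using wJ_wJ by (simp add: fun_eq_iff) (metis w0_w0)
  have "\<alpha> \<notin> J"
  proof
    assume \<alpha>J: "\<alpha> \<in> J"
    have "len \<Delta> (?wJ \<circ> rrefl \<alpha>) + 1 = len \<Delta> ?wJ"
      using len_comp_rrefl_neg[OF wJW] longest_parabolic(2)[OF J] \<alpha>J J by blast
    moreover have "u \<circ> (?wJ \<circ> rrefl \<alpha>) = w0" using u_\<alpha> wJ_wJ by (simp add: fun_eq_iff)
    then have "len \<Delta> w0 = len \<Delta> u + len \<Delta> (?wJ \<circ> rrefl \<alpha>)"
      using min_coset_reps_len_comp[OF J u gen_group_comp_rrefl[OF wJ \<alpha>J]] by simp
    moreover have "len \<Delta> w0 = card pos_roots" using len_w0_comp[OF gen_group_id] by simp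
    ultimately show False using len_top len_w0_longest[OF J] by simp
  qed
  then show ?thesis using that \<alpha>(1) u_\<alpha> by blast
qed

lemma bruhat_cover_w0_rrefl_longest:
  assumes J: "J \<subseteq> \<Delta>" and \<alpha>: "\<alpha> \<in> \<Delta> - J"
  shows "bruhat_cover R \<Delta> (w0 \<circ> rrefl \<alpha> \<circ> longest \<Delta> (gen_group J)) (w0 \<circ> longest \<Delta> (gen_group J))"
proof -
  let ?wJ = "longest \<Delta> (gen_group J)" and ?u = "w0 \<circ> rrefl \<alpha> \<circ> longest \<Delta> (gen_group J)"
  have wJ: "?wJ \<in> gen_group J" and wJW: "?wJ \<in> W" using longest_parabolic(1)[OF J] gen_group_mono[OF J] by auto
  note u = w0_rrefl_longest_min_coset_rep[OF J \<alpha>]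
  have "w0 \<circ> ?u \<circ> ?wJ = rrefl \<alpha>" using longest_parabolic_involution[OF J] by (simp add: fun_eq_iff)
  then have len_eq: "len \<Delta> (w0 \<circ> ?wJ) = len \<Delta> ?u + 1"
    using len_w0_comp_comp_longest[OF J u] len_w0_longest[OF J] len_rrefl_simple \<alpha> by simp
  have "?wJ (rrefl (?wJ \<alpha>) x) = rrefl \<alpha> (?wJ x)" for x
    using orthogonal_transformation_rrefl_conj[OF orthogonal_transformation_gen_group[OF wJ]]
      longest_parabolic_involution[OF J] by simp
  then have "?u \<circ> rrefl (?wJ \<alpha>) = w0 \<circ> ?wJ" by (simp add: fun_eq_iff)
  moreover have "?wJ \<alpha> \<in> R" using W_in_R[OF wJW] \<alpha> simple_subset_R by blast
  ultimately show ?thesis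
    using bruhat_cover_comp_rrefl[OF min_coset_reps_W[OF J u]] len_eq by metis
qed

theorem P_le_id_bruhat_cover_top_iff:
  assumes J: "J \<subseteq> \<Delta>" and u: "u \<in> W"
  shows "(P_le R \<Delta> J id u \<and> bruhat_cover R \<Delta> u (w0 \<circ> longest \<Delta> (gen_group J)))
    \<longleftrightarrow> (\<exists>\<alpha>\<in>\<Delta> - J. u = projP R \<Delta> J (w0 \<circ> rrefl \<alpha>) \<and> u = w0 \<circ> rrefl \<alpha> \<circ> longest \<Delta> (gen_group J))"
proof -
  let ?wJ = "longest \<Delta> (gen_group J)"
  have "projP R \<Delta> J (w0 \<circ> rrefl \<alpha>) = w0 \<circ> rrefl \<alpha> \<circ> ?wJ" if \<alpha>: "\<alpha> \<in> \<Delta> - J" for \<alpha>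
    using projP_comp_parabolic[OF J w0_rrefl_longest_min_coset_rep[OF J \<alpha>] longest_parabolic(1)[OF J]]
    by (simp add: comp_def longest_parabolic_involution[OF J])
  then show ?thesis
    using P_le_id_iff[OF J u] bruhat_cover_top_imp[OF J] bruhat_cover_w0_rrefl_longest[OF J]
      w0_rrefl_longest_min_coset_rep[OF J] by metis
qed

end

theorem lemma3p8:
  fixes R \<Delta> \<Delta>P :: "'a::euclidean_space set" and u :: "'a \<Rightarrow> 'a"
  assumes "root_system R" and "irreducible_rs R" and "is_base R \<Delta>"
    and "\<Delta>P \<subseteq> \<Delta>" and "\<Delta>P \<noteq> \<Delta>" and "\<Delta>P \<noteq> {}"
    and "u \<in> weyl_group R"
  defines "w0 \<equiv> longest \<Delta> (weyl_group R)" and "wP \<equiv> longest \<Delta> (gen_group \<Delta>P)"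
  shows "((bruhat_cover R \<Delta> id u \<and> P_le R \<Delta> \<Delta>P u (w0 \<circ> wP))
           \<longleftrightarrow> (\<exists>\<alpha>\<in>\<Delta>. u = rrefl \<alpha>))
         \<and> ((P_le R \<Delta> \<Delta>P id u \<and> bruhat_cover R \<Delta> u (w0 \<circ> wP))
           \<longleftrightarrow> (\<exists>\<alpha>\<in>\<Delta> - \<Delta>P. u = projP R \<Delta> \<Delta>P (w0 \<circ> rrefl \<alpha>) \<and> u = w0 \<circ> rrefl \<alpha> \<circ> wP))"
proof -
  have rs: "based_root_system R \<Delta>" using assms(1,3) by unfold_locales
  have weyl_eq: "weyl_group R = gen_group \<Delta>" using based_root_system.weyl_group_eq_W[OF rs] .
  show ?thesis
    unfolding w0_def wP_def weyl_eq
    using based_root_system.bruhat_cover_id_P_le_top_iff[OF rs assms(2,4,5)]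
      based_root_system.P_le_id_bruhat_cover_top_iff[OF rs assms(4)] assms(7) weyl_eq
    by simp
qed

end
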